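(* Let $\mathbf{H}$ be the gap-insertion Hopf algebra of noncrossing partitions, $e$ the infinitesimal character with $e(P)=1$ if $P$ is a noncrossing partition with one block and $e(P)=0$ for other noncrossing partitions, and define $\psi_\prec,\psi_\succ,\psi_\star\in\mathbf H^*$ as the unique solutions of $\psi_\prec=\varepsilon+e\prec\psi_\prec$ and $\psi_\succ=\varepsilon+\psi_\succ\succ e$, and $\psi_\star=\exp_\star(e)=\sum_{m\geq0}e^{\star m}/m!$. Then for every nonempty noncrossing partition $P$: 1. $\psi_\prec(P)=1$; 2. $\psi_\succ(P)=1$ if $P$ is boolean and $\psi_\succ(P)=0$ otherwise; 3. if $P$ has $k$ blocks, $\psi_\star(P)=\operatorname{ho}(P)/k!$.
   Context: Noncrossing partitions of $[n]$: no $a<c<b<d$ with $a,b$ in one block and $c,d$ in another; partitions of finite linearly ordered sets identified with partitions of $[n]$ via the order-preserving bijection; $P_{|X}$ induced partition. $\operatorname{Conv}(X)=\{\min X,\dots,\max X\}$; on blocks $\pi\to\rho$ iff $\operatorname{Conv}(\pi)\cap\rho\neq\emptyset$ (transitively closed; for noncrossing $P$ and $\pi\ne\rho$ this means $\rho$ is nested inside $\pi$). Upperset $U$: ($\pi\in U,\pi\to\rho$)$\Rightarrow\rho\in U$; lowerset $L$: ($\pi\in L,\sigma\to\pi$)$\Rightarrow\sigma\in L$. Cut $(L,U)$: lowerset $L$ and complement $U$; $L$ identified with the restriction of $P$ to the union of its blocks, elements $x_1<\dots<x_k$; $D_0=\{y<x_1\}$, $D_i=\{x_i<y<x_{i+1}\}$,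 $D_k=\{y>x_k\}$, $U_i=P_{|D_i}$, $\overline U$ ordered product of nonempty $U_i$. $\mathbf H$: free associative unital algebra on nonempty noncrossing partitions; basis of multipartitions (shift-concatenated); cuts of multipartitions are tuples of cuts, $L=L_1\cdots L_r$, $\overline U=\overline{U_1}\cdots\overline{U_r}$. Coproduct $\Delta(P)=\sum_{\text{cuts}}L\otimes\overline U$, counit $\varepsilon$ ($1$ on $\mathbf 1$, $0$ on nonempty monomials), $f\star g=(f\otimes g)\Delta$. For nonempty $P$: $\Delta_\prec(P)=\sum_{\text{cuts},1\in L}L\otimes\overline U$, $\Delta_\succ(P)=\sum_{\text{cuts},1\in U}L\otimes\overline U$ (according to whether the element $1$ lies in a block of $L$ or of $U$). For $f,g\in\mathbf H^*$, $f\prec g$ and $f\succ g$ vanish on $\mathbf1$ and equal $(f\otimes g)\Delta_\prec$, resp. $(f\otimes g)\Delta_\succ$, on nonempty multipartitions. Infinitesimal characters: linear forms vanishing on $\mathbf1$ and on products of two nonempty monomials. A noncrossing partition is boolean if every block is a set of consecutive integers. A heap ordering of a noncrossing partition $P$ with $k$ blocks is a bijection $\sigma$ from its blocks to $[k]$ such that $\sigma(\pi)<\sigma(\rho)$ whenever $\rho\ne\pi$ is nested inside $\pi$ (i.e. $\sigma$ is monotone for $\to$); $\operatorname{ho}(P)$ is the number of heap orderings. *)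

theory Defs
  imports Complex_Main "HOL-Library.Disjoint_Sets"
begin

(* A set partition is a set of blocks ("nat set set"); a (multi)partition word,
   i.e. a basis monomial of H, is a list of nonempty noncrossing partitions. *)

definition noncrossing :: "nat set set \<Rightarrow> bool" where
  "noncrossing P \<longleftrightarrow> \<not> (\<exists>\<pi>\<in>P. \<exists>\<rho>\<in>P. \<pi> \<noteq> \<rho> \<and>
      (\<exists>a b c d. a < c \<and> c < b \<and> b < d \<and> a \<in> \<pi> \<and> b \<in> \<pi> \<and> c \<in> \<rho> \<and> d \<in> \<rho>))"

definition ncp :: "nat set set \<Rightarrow> bool" where
  "ncp P \<longleftrightarrow> (\<exists>n. partition_on {1..n} P) \<and> noncrossing P"

definition valid_word :: "nat set set list \<Rightarrow> bool" where
  "valid_word w \<longleftrightarrow> (\<forall>P\<in>set w. ncp P \<and> P \<noteq> {})"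

definition Conv :: "nat set \<Rightarrow> nat set" where
  "Conv X = {Min X..Max X}"

(* order-preserving identification of a partition of a finite set of naturals
   with a partition of [n] *)
definition rank :: "nat set \<Rightarrow> nat \<Rightarrow> nat" where
  "rank A x = card {y\<in>A. y < x} + 1"

definition std :: "nat set set \<Rightarrow> nat set set" where
  "std P = (\<lambda>\<pi>. rank (\<Union>P) ` \<pi>) ` P"

definition restr :: "nat set set \<Rightarrow> nat set \<Rightarrow> nat set set" where
  "restr P X = (\<lambda>\<pi>. \<pi> \<inter> X) ` P - {{}}"

definition lowersets :: "nat set set \<Rightarrow> nat set set set" where
  "lowersets P = {L. L \<subseteq> P \<and> (\<forall>\<pi>\<in>L. \<forall>\<sigma>\<in>P. Conv \<sigma> \<inter> \<pi> \<noteq> {} \<longrightarrow> \<sigma> \<in> L)}"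

(* gap D_i: elements of P not in the lowerset L lying between x_i and x_{i+1}
   (x_1 < ... < x_k the elements of L); D_0 below x_1, D_k above x_k *)
definition gap :: "nat set set \<Rightarrow> nat set set \<Rightarrow> nat \<Rightarrow> nat set" where
  "gap P L i = {y \<in> \<Union>P - \<Union>L. card {x \<in> \<Union>L. x < y} = i}"

(* left factor L of a cut, as a monomial (empty lowerset = unit 1 = empty word) *)
definition lower :: "nat set set \<Rightarrow> nat set set \<Rightarrow> nat set set list" where
  "lower P L = (if L = {} then [] else [std L])"

(* right factor \<overline>U: ordered product of the nonempty U_i = P|D_i *)
definition upper :: "nat set set \<Rightarrow> nat set set \<Rightarrow> nat set set list" where
  "upper P L = filter (\<lambda>Q. Q \<noteq> {})
     (map (\<lambda>i. std (restr P (gap P L i))) [0..<card (\<Union>L) + 1])"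

(* linear forms on H are given by their values on basis words *)
type_synonym form = "nat set set list \<Rightarrow> real"

(* convolution f \<star> g = (f \<otimes> g) \<Delta>, with \<Delta> extended multiplicatively:
   cuts of a multipartition are tuples of cuts *)
definition conv :: "form \<Rightarrow> form \<Rightarrow> form" where
  "conv f g w = (\<Sum>Ls \<in> listset (map lowersets w).
      f (concat (map (\<lambda>(P, L). lower P L) (zip w Ls))) *
      g (concat (map (\<lambda>(P, L). upper P L) (zip w Ls))))"

(* f \<prec> g : cuts where the element 1 (of the shift-concatenated multipartition,
   i.e. of its first partition) lies in a block of L *)
definition dprec :: "form \<Rightarrow> form \<Rightarrow> form" where
  "dprec f g w = (if w = [] then 0 else
     (\<Sum>Ls \<in> {Ls \<in> listset (map lowersets w). (1::nat) \<in> \<Union>(hd Ls)}.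
      f (concat (map (\<lambda>(P, L). lower P L) (zip w Ls))) *
      g (concat (map (\<lambda>(P, L). upper P L) (zip w Ls)))))"

definition dsucc :: "form \<Rightarrow> form \<Rightarrow> form" where
  "dsucc f g w = (if w = [] then 0 else
     (\<Sum>Ls \<in> {Ls \<in> listset (map lowersets w). (1::nat) \<notin> \<Union>(hd Ls)}.
      f (concat (map (\<lambda>(P, L). lower P L) (zip w Ls))) *
      g (concat (map (\<lambda>(P, L). upper P L) (zip w Ls)))))"

definition eps :: form where
  "eps w = (if w = [] then 1 else 0)"

definition echar :: form where
  "echar w = (if \<exists>P. w = [P] \<and> card P = 1 then 1 else 0)"

fun conv_pow :: "form \<Rightarrow> nat \<Rightarrow> form" where
  "conv_pow f 0 = eps"
| "conv_pow f (Suc m) = conv f (conv_pow f m)"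

definition psi_star :: form where
  "psi_star w = (\<Sum>m. conv_pow echar m w / fact m)"

definition prec_eq :: "form \<Rightarrow> bool" where
  "prec_eq \<psi> \<longleftrightarrow> (\<forall>w. valid_word w \<longrightarrow> \<psi> w = eps w + dprec echar \<psi> w)"

definition succ_eq :: "form \<Rightarrow> bool" where
  "succ_eq \<psi> \<longleftrightarrow> (\<forall>w. valid_word w \<longrightarrow> \<psi> w = eps w + dsucc \<psi> echar w)"

definition boolean_ncp :: "nat set set \<Rightarrow> bool" where
  "boolean_ncp P \<longleftrightarrow> (\<forall>\<pi>\<in>P. Conv \<pi> = \<pi>)"

definition heap_orderings :: "nat set set \<Rightarrow> (nat set \<Rightarrow> nat) set" where
  "heap_orderings P = {\<sigma> \<in> extensional P. bij_betw \<sigma> P {1..card P} \<and>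
     (\<forall>\<pi>\<in>P. \<forall>\<rho>\<in>P. \<rho> \<noteq> \<pi> \<and> Conv \<pi> \<inter> \<rho> \<noteq> {} \<longrightarrow> \<sigma> \<pi> < \<sigma> \<rho>)}"

definition ho :: "nat set set \<Rightarrow> nat" where
  "ho P = card (heap_orderings P)"

end

theory Submission
  imports Defs
begin

text \<open>
  Since \<open>e\<close> vanishes on all monomials except one-block partitions, in
  \<open>(e \<prec> \<psi>)(P w)\<close>, \<open>(\<psi> \<succ> e)(P w)\<close> and \<open>(e \<star> g)(P w)\<close> only cuts survive that are trivial on
  all letters but one, and there they split off a single block (or keep all blocks but one).

  For \<open>\<prec>\<close> the split-off block must contain \<open>1\<close>; it is never nested in another block, so
  \<open>\<psi>\<^sub>\<prec>(P w) = \<psi>\<^sub>\<prec>(U w)\<close> for a word \<open>U w\<close> with one block fewer, whence \<open>\<psi>\<^sub>\<prec> = 1\<close>.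
  For \<open>\<succ>\<close> the lower part must consist of all blocks but the one containing \<open>1\<close>, which is a
  lowerset iff that block is an interval; relabelling the rest preserves being boolean, so
  \<open>\<psi>\<^sub>\<succ>\<close> is the indicator of boolean words.

  For \<open>\<star>\<close>, \<open>e \<star> g\<close> removes an outer block from one letter; the remaining blocks fall into
  gaps that are mutually unnested. The ratio \<open>r(Q) = ho(Q)/|Q|!\<close> satisfies
  \<open>\<Sum>\<^sub>x r(Q - {x}) = |Q| r(Q)\<close>, summing over the outer blocks \<open>x\<close> (the block ordered first
  by a heap ordering is outer), and is multiplicative over unnested unions. Hence
  \<open>e\<^sup>\<star>\<^sup>m(w) = m! \<Prod> r(P\<^sub>i)\<close> when \<open>m\<close> is the number of blocks of \<open>w\<close> (and \<open>0\<close> otherwise), and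
  \<open>exp\<^sub>\<star>(e)(P) = r(P)\<close>.
\<close>

section \<open>Finite partitions and their standardization\<close>

definition finite_partition :: "'a set set \<Rightarrow> bool" where
  "finite_partition Q \<longleftrightarrow> finite Q \<and> (\<forall>\<pi>\<in>Q. finite \<pi> \<and> \<pi> \<noteq> {}) \<and> disjoint Q"

lemma finite_partition_subset: "finite_partition P \<Longrightarrow> Q \<subseteq> P \<Longrightarrow> finite_partition Q"
  unfolding finite_partition_def by (auto intro: finite_subset pairwise_subset)

lemma finite_partition_finite: "finite_partition Q \<Longrightarrow> finite Q"
  unfolding finite_partition_def by blast

lemma finite_partition_block:
  "finite_partition Q \<Longrightarrow> \<pi> \<in> Q \<Longrightarrow> finite \<pi> \<and> \<pi> \<noteq> {}"
  unfolding finite_partition_def by blast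

lemma finite_partition_finite_Union: "finite_partition Q \<Longrightarrow> finite (\<Union>Q)"
  unfolding finite_partition_def by auto

lemma finite_partition_block_eq:
  "finite_partition Q \<Longrightarrow> \<pi> \<in> Q \<Longrightarrow> \<rho> \<in> Q \<Longrightarrow> x \<in> \<pi> \<Longrightarrow> x \<in> \<rho> \<Longrightarrow> \<pi> = \<rho>"
  unfolding finite_partition_def disjoint_def by blast

lemma ncp_Union:
  assumes "ncp P" obtains n where "\<Union>P = {1..n}"
  using assms unfolding ncp_def partition_on_def by blast

lemma ncp_noncrossing: "ncp P \<Longrightarrow> noncrossing P"
  unfolding ncp_def by blast

lemma ncp_finite_partition: assumes "ncp P" shows "finite_partition P"
proof -
  obtain n where "partition_on {1..n} P" using assms unfolding ncp_def by blast
  hence U: "\<Union>P = {1..n}" and "disjoint P" "{} \<notin> P" unfolding partition_on_def by auto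
  moreover have "finite P" using U by (metis finite_UnionD finite_atLeastAtMost)
  moreover have "finite \<pi>" if "\<pi> \<in> P" for \<pi>
    using U that by (metis Union_upper finite_atLeastAtMost finite_subset)
  ultimately show ?thesis unfolding finite_partition_def by auto
qed

lemma ncp_elem_ge_1:
  assumes "ncp P" "\<pi> \<in> P" "x \<in> \<pi>" shows "1 \<le> x"
proof -
  obtain n where "\<Union>P = {1..n}" using ncp_Union[OF assms(1)] .
  moreover have "x \<in> \<Union>P" using assms(2,3) by blast
  ultimately show ?thesis by simp
qed

lemma noncrossingD:
  assumes "noncrossing Q" "\<pi> \<in> Q" "\<rho> \<in> Q" "\<pi> \<noteq> \<rho>" "a < c" "c < b" "b < d"
    "a \<in> \<pi>" "b \<in> \<pi>" "c \<in> \<rho>" "d \<in> \<rho>"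
  shows False
proof -
  have "\<exists>a b c d. a < c \<and> c < b \<and> b < d \<and> a \<in> \<pi> \<and> b \<in> \<pi> \<and> c \<in> \<rho> \<and> d \<in> \<rho>"
    using assms(5-) by (intro exI[of _ a] exI[of _ b] exI[of _ c] exI[of _ d]) simp
  hence "\<exists>\<pi>\<in>Q. \<exists>\<rho>\<in>Q. \<pi> \<noteq> \<rho> \<and>
      (\<exists>a b c d. a < c \<and> c < b \<and> b < d \<and> a \<in> \<pi> \<and> b \<in> \<pi> \<and> c \<in> \<rho> \<and> d \<in> \<rho>)"
    using assms(2-4) by (intro bexI[of _ \<pi>] bexI[of _ \<rho>] conjI)
  thus False using assms(1) unfolding noncrossing_def by contradiction
qed

lemma noncrossing_subset:
  assumes "noncrossing P" "Q \<subseteq> P" shows "noncrossing Q"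
  unfolding noncrossing_def
proof (rule notI, elim bexE exE conjE)
  fix \<pi> \<rho> a b c d assume "\<pi> \<in> Q" "\<rho> \<in> Q" "\<pi> \<noteq> \<rho>" "a < c" "c < b" "b < d"
    "a \<in> \<pi>" "b \<in> \<pi>" "c \<in> \<rho>" "d \<in> \<rho>"
  thus False using noncrossingD[OF assms(1)] assms(2) by (meson subsetD)
qed

lemma subset_Conv: "finite \<pi> \<Longrightarrow> \<pi> \<subseteq> Conv \<pi>"
  unfolding Conv_def by auto

lemma Conv_image_Int:
  assumes f: "strict_mono_on S f" and \<pi>: "\<pi> \<subseteq> S" "finite \<pi>" "\<pi> \<noteq> {}" and X: "X \<subseteq> S"
  shows "Conv (f ` \<pi>) \<inter> f ` X = f ` (Conv \<pi> \<inter> X)"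
proof -
  have m: "Min \<pi> \<in> \<pi>" "Max \<pi> \<in> \<pi>" using \<pi>(2,3) by simp_all
  hence mS: "Min \<pi> \<in> S" "Max \<pi> \<in> S" using \<pi>(1) by blast+
  have le: "f x \<le> f y \<longleftrightarrow> x \<le> y" if "x \<in> S" "y \<in> S" for x y
    by (rule strict_mono_on_less_eq[OF f that])
  have "Min (f ` \<pi>) = f (Min \<pi>)"
  proof (rule Min_eqI)
    fix y assume "y \<in> f ` \<pi>"
    then obtain x where "x \<in> \<pi>" "y = f x" by blast
    moreover have "x \<in> S" using \<open>x \<in> \<pi>\<close> \<pi>(1) by blast
    ultimately show "f (Min \<pi>) \<le> y" using le[OF mS(1)] \<pi>(2) by simp
  qed (use \<pi> m in auto)
  moreover have "Max (f ` \<pi>) = f (Max \<pi>)"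
  proof (rule Max_eqI)
    fix y assume "y \<in> f ` \<pi>"
    then obtain x where "x \<in> \<pi>" "y = f x" by blast
    moreover have "x \<in> S" using \<open>x \<in> \<pi>\<close> \<pi>(1) by blast
    ultimately show "y \<le> f (Max \<pi>)" using le[OF _ mS(2)] \<pi>(2) by simp
  qed (use \<pi> m in auto)
  moreover have "f x \<in> {f (Min \<pi>)..f (Max \<pi>)} \<longleftrightarrow> x \<in> {Min \<pi>..Max \<pi>}" if "x \<in> X" for x
    using le[OF mS(1)] le[OF _ mS(2)] that X by auto
  ultimately show ?thesis unfolding Conv_def by auto
qed

lemma strict_mono_on_rank: assumes "finite A" shows "strict_mono_on A (rank A)"
proof (rule strict_mono_onI)
  fix x y assume "x \<in> A" "y \<in> A" "x < y"
  hence "{z\<in>A. z < x} \<subset> {z\<in>A. z < y}" by auto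
  thus "rank A x < rank A y" unfolding rank_def using assms by (simp add: psubset_card_mono)
qed

lemma rank_image: assumes "finite A" shows "rank A ` A = {1..card A}"
proof -
  have "card {z\<in>A. z < x} < card A" if "x \<in> A" for x
    using assms that by (intro psubset_card_mono) auto
  hence "rank A ` A \<subseteq> {1..card A}" unfolding rank_def by (auto simp: Suc_le_eq)
  moreover have "card (rank A ` A) = card A"
    using strict_mono_on_imp_inj_on[OF strict_mono_on_rank[OF assms]] by (simp add: card_image)
  ultimately show ?thesis by (intro card_subset_eq) auto
qed

lemma rank_atLeastAtMost: "x \<in> {1..n} \<Longrightarrow> rank {1..n} x = x"
proof -
  assume "x \<in> {1..n}"
  hence "{y \<in> {1..n}. y < x} = {1..<x}" by auto
  thus ?thesis unfolding rank_def using \<open>x \<in> {1..n}\<close> by auto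
qed

lemma std_eq_image: "std Q = image (rank (\<Union>Q)) ` Q"
  unfolding std_def ..

lemma std_empty [simp]: "std {} = {}"
  unfolding std_def by simp

lemma std_ncp: assumes "ncp P" shows "std P = P"
proof -
  obtain n where n: "\<Union>P = {1..n}" using ncp_Union[OF assms] .
  have "rank (\<Union>P) ` \<pi> = \<pi>" if "\<pi> \<in> P" for \<pi>
  proof -
    have "\<pi> \<subseteq> {1..n}" using that n by blast
    hence "\<forall>x\<in>\<pi>. rank {1..n} x = x" using rank_atLeastAtMost by blast
    thus ?thesis unfolding n by simp
  qed
  thus ?thesis unfolding std_def by simp
qed

lemma inj_on_image_blocks:
  assumes "finite_partition Q" "inj_on f (\<Union>Q)"
  shows "inj_on (image f) Q"
proof (rule inj_onI)
  fix \<pi> \<rho> assume \<pi>: "\<pi> \<in> Q" and \<rho>: "\<rho> \<in> Q" and eq: "f ` \<pi> = f ` \<rho>"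
  obtain y where y: "y \<in> \<pi>" using \<pi> assms(1) finite_partition_block by blast
  then obtain z where "z \<in> \<rho>" "f y = f z" using eq by (metis imageE imageI)
  hence "y = z" using assms(2) \<pi> \<rho> y by (auto simp: inj_on_def)
  thus "\<pi> = \<rho>" using finite_partition_block_eq[OF assms(1) \<pi> \<rho> y] \<open>z \<in> \<rho>\<close> by simp
qed

lemma finite_partition_image_blocks:
  assumes "finite_partition Q" "inj_on f (\<Union>Q)"
  shows "finite_partition (image f ` Q)"
proof -
  have "f ` \<pi> \<inter> f ` \<rho> = {}" if "\<pi> \<in> Q" "\<rho> \<in> Q" "f ` \<pi> \<noteq> f ` \<rho>" for \<pi> \<rho>
  proof -
    have "\<pi> \<inter> \<rho> = {}"
      using that assms(1) unfolding finite_partition_def disjoint_def by blast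
    moreover have "f ` \<pi> \<inter> f ` \<rho> = f ` (\<pi> \<inter> \<rho>)"
      using inj_on_image_Int[OF assms(2)] that(1,2) by blast
    ultimately show ?thesis by simp
  qed
  thus ?thesis using assms(1) unfolding finite_partition_def disjoint_def by auto
qed

lemma noncrossing_image_blocks:
  assumes Q: "noncrossing Q" and f: "strict_mono_on (\<Union>Q) f"
  shows "noncrossing (image f ` Q)"
  unfolding noncrossing_def
proof (rule notI, elim bexE exE conjE)
  fix A B a b c d
  assume A: "A \<in> image f ` Q" and B: "B \<in> image f ` Q" and ne: "A \<noteq> B"
    and ord: "a < c" "c < b" "b < d" and ab: "a \<in> A" "b \<in> A" and cd: "c \<in> B" "d \<in> B"
  obtain \<pi> \<rho> where \<pi>: "\<pi> \<in> Q" "A = f ` \<pi>" and \<rho>: "\<rho> \<in> Q" "B = f ` \<rho>" using A B by blast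
  obtain a' b' where "a' \<in> \<pi>" "b' \<in> \<pi>" "a = f a'" "b = f b'" using ab \<pi> by blast
  moreover obtain c' d' where "c' \<in> \<rho>" "d' \<in> \<rho>" "c = f c'" "d = f d'" using cd \<rho> by blast
  moreover have "a' \<in> \<Union>Q" "b' \<in> \<Union>Q" "c' \<in> \<Union>Q" "d' \<in> \<Union>Q"
    using \<pi> \<rho> calculation by blast+
  ultimately have "a' < c'" "c' < b'" "b' < d'"
    using ord strict_mono_on_less[OF f] by simp_all
  moreover have "\<pi> \<noteq> \<rho>" using ne \<pi> \<rho> by blast
  ultimately show False using noncrossingD[OF Q \<pi>(1) \<rho>(1)]
      \<open>a' \<in> \<pi>\<close> \<open>b' \<in> \<pi>\<close> \<open>c' \<in> \<rho>\<close> \<open>d' \<in> \<rho>\<close> by blast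
qed

lemma
  assumes "finite_partition Q"
  shows inj_on_std: "inj_on (image (rank (\<Union>Q))) Q"
    and card_std: "card (std Q) = card Q"
    and Union_std: "\<Union>(std Q) = {1..card (\<Union>Q)}"
    and finite_partition_std: "finite_partition (std Q)"
proof -
  have f: "strict_mono_on (\<Union>Q) (rank (\<Union>Q))"
    by (rule strict_mono_on_rank[OF finite_partition_finite_Union[OF assms]])
  show inj: "inj_on (image (rank (\<Union>Q))) Q"
    by (rule inj_on_image_blocks[OF assms strict_mono_on_imp_inj_on[OF f]])
  show "card (std Q) = card Q" unfolding std_eq_image by (rule card_image[OF inj])
  show "\<Union>(std Q) = {1..card (\<Union>Q)}"
    using rank_image[OF finite_partition_finite_Union[OF assms]]
    unfolding std_eq_image by (metis image_Union)
  show "finite_partition (std Q)"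
    unfolding std_eq_image
    by (rule finite_partition_image_blocks[OF assms strict_mono_on_imp_inj_on[OF f]])
qed

lemma ncp_std:
  assumes "finite_partition Q" "noncrossing Q"
  shows "ncp (std Q)"
proof -
  have "partition_on {1..card (\<Union>Q)} (std Q)"
    using finite_partition_std[OF assms(1)] Union_std[OF assms(1)]
    unfolding partition_on_def finite_partition_def by blast
  moreover have "strict_mono_on (\<Union>Q) (rank (\<Union>Q))"
    by (rule strict_mono_on_rank[OF finite_partition_finite_Union[OF assms(1)]])
  hence "noncrossing (std Q)"
    unfolding std_eq_image by (rule noncrossing_image_blocks[OF assms(2)])
  ultimately show ?thesis unfolding ncp_def by (intro conjI exI)
qed

section \<open>Heap orderings\<close>

definition outer_block :: "nat set set \<Rightarrow> nat set \<Rightarrow> bool" where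
  "outer_block Q \<pi> \<longleftrightarrow> \<pi> \<in> Q \<and> (\<forall>\<rho>\<in>Q. \<rho> \<noteq> \<pi> \<longrightarrow> Conv \<rho> \<inter> \<pi> = {})"

lemma heap_orderings_iff:
  assumes "finite Q"
  shows "\<sigma> \<in> heap_orderings Q \<longleftrightarrow> \<sigma> \<in> extensional Q \<and> inj_on \<sigma> Q \<and> \<sigma> ` Q \<subseteq> {1..card Q} \<and>
           (\<forall>\<pi>\<in>Q. \<forall>\<rho>\<in>Q. \<rho> \<noteq> \<pi> \<and> Conv \<pi> \<inter> \<rho> \<noteq> {} \<longrightarrow> \<sigma> \<pi> < \<sigma> \<rho>)"
proof -
  have "bij_betw \<sigma> Q {1..card Q} \<longleftrightarrow> inj_on \<sigma> Q \<and> \<sigma> ` Q \<subseteq> {1..card Q}"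
    using assms unfolding bij_betw_def by (metis card_atLeastAtMost card_image card_subset_eq
        diff_Suc_1 finite_atLeastAtMost order_refl)
  thus ?thesis unfolding heap_orderings_def by blast
qed

lemma ho_empty: "ho {} = 1"
proof -
  have "heap_orderings {} = {\<lambda>_. undefined}"
    unfolding heap_orderings_def by (auto simp: bij_betw_def extensional_def)
  thus ?thesis unfolding ho_def by simp
qed

lemma finite_heap_orderings: assumes "finite Q" shows "finite (heap_orderings Q)"
proof -
  have "heap_orderings Q \<subseteq> Q \<rightarrow>\<^sub>E {1..card Q}"
    unfolding heap_orderings_def PiE_def bij_betw_def by auto
  thus ?thesis using assms by (meson finite_PiE finite_atLeastAtMost finite_subset)
qed

lemma heap_ordering_drop_first:
  assumes Q: "finite Q" and \<sigma>: "\<sigma> \<in> heap_orderings Q" "\<sigma> x = 1" and x: "x \<in> Q"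
  shows "restrict (\<lambda>y. \<sigma> y - 1) (Q - {x}) \<in> heap_orderings (Q - {x})"
proof -
  have inj: "inj_on \<sigma> Q" and range: "\<sigma> ` Q \<subseteq> {1..card Q}"
    and heap: "\<forall>\<pi>\<in>Q. \<forall>\<rho>\<in>Q. \<rho> \<noteq> \<pi> \<and> Conv \<pi> \<inter> \<rho> \<noteq> {} \<longrightarrow> \<sigma> \<pi> < \<sigma> \<rho>"
    using \<sigma>(1) heap_orderings_iff[OF Q] by auto
  have ge2: "2 \<le> \<sigma> y" if "y \<in> Q - {x}" for y
  proof -
    have "\<sigma> y \<noteq> \<sigma> x" using inj_onD[OF inj] that x by blast
    moreover have "\<sigma> y \<in> {1..card Q}" using range that by blast
    ultimately show ?thesis using \<sigma>(2) by simp
  qed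
  have "inj_on (\<lambda>y. \<sigma> y - 1) (Q - {x})"
  proof (rule inj_onI)
    fix y z assume y: "y \<in> Q - {x}" and z: "z \<in> Q - {x}" and eq: "\<sigma> y - 1 = \<sigma> z - 1"
    have "\<sigma> y = \<sigma> z" using eq ge2[OF y] ge2[OF z] by linarith
    thus "y = z" using inj_onD[OF inj] y z by blast
  qed
  moreover have "(\<lambda>y. \<sigma> y - 1) ` (Q - {x}) \<subseteq> {1..card (Q - {x})}"
  proof
    fix z assume "z \<in> (\<lambda>y. \<sigma> y - 1) ` (Q - {x})"
    then obtain y where y: "y \<in> Q - {x}" "z = \<sigma> y - 1" by blast
    have "\<sigma> y \<le> card Q" using range y(1) by auto
    thus "z \<in> {1..card (Q - {x})}" using ge2[OF y(1)] y(2) Q x by (simp, linarith)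
  qed
  moreover have "\<sigma> \<pi> - 1 < \<sigma> \<rho> - 1"
    if "\<pi> \<in> Q - {x}" "\<rho> \<in> Q - {x}" "\<rho> \<noteq> \<pi>" "Conv \<pi> \<inter> \<rho> \<noteq> {}" for \<pi> \<rho>
    using heap that ge2[OF that(1)] by force
  ultimately show ?thesis unfolding heap_orderings_iff[OF finite_Diff[OF Q]] by auto
qed

lemma heap_ordering_add_first:
  assumes Q: "finite Q" and x: "outer_block Q x" and \<tau>: "\<tau> \<in> heap_orderings (Q - {x})"
  defines "\<sigma> \<equiv> \<lambda>y. if y = x then 1 else if y \<in> Q then \<tau> y + 1 else undefined"
  shows "\<sigma> \<in> heap_orderings Q"
proof -
  have xQ: "x \<in> Q" using x unfolding outer_block_def by blast
  have inj: "inj_on \<tau> (Q - {x})" and range: "\<tau> ` (Q - {x}) \<subseteq> {1..card Q - 1}"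
    and heap: "\<forall>\<pi>\<in>Q - {x}. \<forall>\<rho>\<in>Q - {x}. \<rho> \<noteq> \<pi> \<and> Conv \<pi> \<inter> \<rho> \<noteq> {} \<longrightarrow> \<tau> \<pi> < \<tau> \<rho>"
    using \<tau> heap_orderings_iff[of "Q - {x}"] Q xQ by auto
  have pos: "\<sigma> y = \<tau> y + 1" "\<tau> y + 1 \<noteq> 1" if "y \<in> Q - {x}" for y
    using range that unfolding \<sigma>_def by auto
  have "inj_on \<sigma> Q"
  proof (rule inj_onI)
    fix y z assume y: "y \<in> Q" and z: "z \<in> Q" and eq: "\<sigma> y = \<sigma> z"
    show "y = z"
    proof (cases "y = x \<or> z = x")
      case True thus ?thesis using eq pos y z unfolding \<sigma>_def by (metis Diff_iff singletonD)
    next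
      case False thus ?thesis using eq pos y z inj_onD[OF inj] by simp
    qed
  qed
  moreover have "\<sigma> ` Q \<subseteq> {1..card Q}"
    using range Q xQ unfolding \<sigma>_def by (fastforce simp: card_gt_0_iff Suc_le_eq)
  moreover have "\<sigma> \<pi> < \<sigma> \<rho>" if "\<pi> \<in> Q" "\<rho> \<in> Q" "\<rho> \<noteq> \<pi>" "Conv \<pi> \<inter> \<rho> \<noteq> {}" for \<pi> \<rho>
  proof -
    have \<rho>: "\<rho> \<in> Q - {x}" using x that unfolding outer_block_def by blast
    show ?thesis
    proof (cases "\<pi> = x")
      case True thus ?thesis using pos[OF \<rho>] unfolding \<sigma>_def by simp
    next
      case False
      hence "\<tau> \<pi> < \<tau> \<rho>" using heap that \<rho> by blast
      thus ?thesis using pos[OF \<rho>] pos[of \<pi>] False that(1) by simp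
    qed
  qed
  moreover have "\<sigma> \<in> extensional Q" unfolding \<sigma>_def extensional_def using xQ by auto
  ultimately show ?thesis unfolding heap_orderings_iff[OF Q] by blast
qed

lemma card_heap_orderings_first:
  assumes Q: "finite Q" and x: "outer_block Q x"
  shows "card {\<sigma> \<in> heap_orderings Q. \<sigma> x = 1} = ho (Q - {x})"
proof -
  define drop where "drop \<sigma> = restrict (\<lambda>y. \<sigma> y - 1) (Q - {x})" for \<sigma> :: "nat set \<Rightarrow> nat"
  define add where "add \<tau> = (\<lambda>y. if y = x then 1 else if y \<in> Q then \<tau> y + 1 else undefined)"
    for \<tau> :: "nat set \<Rightarrow> nat"
  have xQ: "x \<in> Q" using x unfolding outer_block_def by blast
  have "bij_betw drop {\<sigma> \<in> heap_orderings Q. \<sigma> x = 1} (heap_orderings (Q - {x}))"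
  proof (rule bij_betw_byWitness[where f' = add])
    show "\<forall>\<sigma>\<in>{\<sigma> \<in> heap_orderings Q. \<sigma> x = 1}. add (drop \<sigma>) = \<sigma>"
    proof (intro ballI ext)
      fix \<sigma> y assume \<sigma>: "\<sigma> \<in> {\<sigma> \<in> heap_orderings Q. \<sigma> x = 1}"
      hence "\<sigma> \<in> extensional Q" "\<sigma> ` Q \<subseteq> {1..card Q}" using heap_orderings_iff[OF Q] by auto
      thus "add (drop \<sigma>) y = \<sigma> y" using \<sigma> unfolding add_def drop_def extensional_def by auto
    qed
    show "\<forall>\<tau>\<in>heap_orderings (Q - {x}). drop (add \<tau>) = \<tau>"
    proof (intro ballI ext)
      fix \<tau> y assume "\<tau> \<in> heap_orderings (Q - {x})"
      hence "\<tau> \<in> extensional (Q - {x})" unfolding heap_orderings_def by blast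
      thus "drop (add \<tau>) y = \<tau> y" unfolding add_def drop_def extensional_def by auto
    qed
    show "drop ` {\<sigma> \<in> heap_orderings Q. \<sigma> x = 1} \<subseteq> heap_orderings (Q - {x})"
      using heap_ordering_drop_first[OF Q _ _ xQ] unfolding drop_def by blast
    show "add ` heap_orderings (Q - {x}) \<subseteq> {\<sigma> \<in> heap_orderings Q. \<sigma> x = 1}"
      using heap_ordering_add_first[OF Q x] unfolding add_def by auto
  qed
  thus ?thesis unfolding ho_def by (rule bij_betw_same_card)
qed

lemma outer_block_heap_ordering_first:
  assumes Q: "finite Q" and \<sigma>: "\<sigma> \<in> heap_orderings Q" "\<sigma> x = 1" and x: "x \<in> Q"
  shows "outer_block Q x"
  unfolding outer_block_def
proof (intro conjI ballI impI x)
  fix \<pi> assume \<pi>: "\<pi> \<in> Q" "\<pi> \<noteq> x"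
  have heap: "\<forall>\<pi>\<in>Q. \<forall>\<rho>\<in>Q. \<rho> \<noteq> \<pi> \<and> Conv \<pi> \<inter> \<rho> \<noteq> {} \<longrightarrow> \<sigma> \<pi> < \<sigma> \<rho>"
    and "\<sigma> ` Q \<subseteq> {1..card Q}" using \<sigma>(1) heap_orderings_iff[OF Q] by auto
  hence "\<not> \<sigma> \<pi> < \<sigma> x" using \<sigma>(2) \<pi>(1) by fastforce
  thus "Conv \<pi> \<inter> x = {}" using heap \<pi> x by blast
qed

lemma ho_rec:
  assumes Q: "finite Q" "Q \<noteq> {}"
  shows "ho Q = (\<Sum>x\<in>{x\<in>Q. outer_block Q x}. ho (Q - {x}))"
proof -
  let ?O = "{x\<in>Q. outer_block Q x}"
  let ?H = "\<lambda>x. {\<sigma> \<in> heap_orderings Q. \<sigma> x = 1}"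
  have "heap_orderings Q \<subseteq> (\<Union>x\<in>?O. ?H x)"
  proof
    fix \<sigma> assume \<sigma>: "\<sigma> \<in> heap_orderings Q"
    have "\<sigma> ` Q = {1..card Q}" using \<sigma> unfolding heap_orderings_def bij_betw_def by blast
    moreover have "1 \<in> {1..card Q}" using Q by (simp add: Suc_leI card_gt_0_iff)
    ultimately obtain x where "x \<in> Q" "\<sigma> x = 1" by (metis imageE)
    thus "\<sigma> \<in> (\<Union>x\<in>?O. ?H x)" using outer_block_heap_ordering_first[OF Q(1) \<sigma>] \<sigma> by blast
  qed
  hence "heap_orderings Q = (\<Union>x\<in>?O. ?H x)" by blast
  hence "ho Q = card (\<Union>x\<in>?O. ?H x)" unfolding ho_def by simp
  also have "\<dots> = (\<Sum>x\<in>?O. card (?H x))"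
  proof (rule card_UN_disjoint)
    show "finite ?O" using Q by simp
    show "\<forall>x\<in>?O. finite (?H x)"
      by (intro ballI finite_subset[OF _ finite_heap_orderings[OF Q(1)]]) blast
    show "\<forall>x\<in>?O. \<forall>y\<in>?O. x \<noteq> y \<longrightarrow> ?H x \<inter> ?H y = {}"
    proof (intro ballI impI equals0I)
      fix x y \<sigma> assume "x \<in> ?O" "y \<in> ?O" "x \<noteq> y" "\<sigma> \<in> ?H x \<inter> ?H y"
      moreover from this have "inj_on \<sigma> Q" using heap_orderings_iff[OF Q(1)] by blast
      ultimately show False using inj_onD[of \<sigma> Q x y] by auto
    qed
  qed
  also have "\<dots> = (\<Sum>x\<in>?O. ho (Q - {x}))"
    using card_heap_orderings_first[OF Q(1)] by simp
  finally show ?thesis .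
qed

lemma outer_block_image:
  assumes inj: "inj_on F Q"
    and nest: "\<forall>\<pi>\<in>Q. \<forall>\<rho>\<in>Q. Conv (F \<pi>) \<inter> F \<rho> = {} \<longleftrightarrow> Conv \<pi> \<inter> \<rho> = {}"
    and x: "x \<in> Q"
  shows "outer_block (F ` Q) (F x) \<longleftrightarrow> outer_block Q x"
proof -
  have "F \<pi> \<noteq> F x \<longleftrightarrow> \<pi> \<noteq> x" if "\<pi> \<in> Q" for \<pi> using inj_onD[OF inj] x that by blast
  thus ?thesis unfolding outer_block_def using nest x by auto
qed

lemma ho_image:
  assumes "finite Q" "inj_on F Q"
    "\<forall>\<pi>\<in>Q. \<forall>\<rho>\<in>Q. Conv (F \<pi>) \<inter> F \<rho> = {} \<longleftrightarrow> Conv \<pi> \<inter> \<rho> = {}"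
  shows "ho (F ` Q) = ho Q"
  using assms
proof (induction "card Q" arbitrary: Q rule: less_induct)
  case less
  show ?case
  proof (cases "Q = {}")
    case True thus ?thesis by simp
  next
    case False
    let ?O = "{x\<in>Q. outer_block Q x}"
    have outer: "{y\<in>F ` Q. outer_block (F ` Q) y} = F ` ?O"
      using outer_block_image[OF less.prems(2,3)] by blast
    have "ho (F ` Q) = (\<Sum>y\<in>F ` ?O. ho (F ` Q - {y}))"
      using ho_rec[of "F ` Q"] less.prems(1) False unfolding outer by simp
    also have "\<dots> = (\<Sum>x\<in>?O. ho (F ` Q - {F x}))"
      using inj_on_subset[OF less.prems(2)] by (subst sum.reindex) auto
    also have "\<dots> = (\<Sum>x\<in>?O. ho (Q - {x}))"
    proof (rule sum.cong[OF refl])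
      fix x assume x: "x \<in> ?O"
      hence "F ` Q - {F x} = F ` (Q - {x})" using inj_on_image_set_diff[OF less.prems(2)] by simp
      moreover have "card (Q - {x}) < card Q" using x card_Diff1_less[OF less.prems(1)] by blast
      hence "ho (F ` (Q - {x})) = ho (Q - {x})"
        using less.prems by (intro less.hyps) (auto intro: inj_on_subset)
      ultimately show "ho (F ` Q - {F x}) = ho (Q - {x})" by simp
    qed
    also have "\<dots> = ho Q" using ho_rec[OF less.prems(1) False] by simp
    finally show ?thesis .
  qed
qed

lemma ho_std: assumes "finite_partition Q" shows "ho (std Q) = ho Q"
  unfolding std_eq_image
proof (rule ho_image)
  let ?f = "rank (\<Union>Q)"
  have f: "strict_mono_on (\<Union>Q) ?f"
    by (rule strict_mono_on_rank[OF finite_partition_finite_Union[OF assms]])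
  show "finite Q" by (rule finite_partition_finite[OF assms])
  show "inj_on (image ?f) Q" by (rule inj_on_std[OF assms])
  show "\<forall>\<pi>\<in>Q. \<forall>\<rho>\<in>Q. Conv (?f ` \<pi>) \<inter> ?f ` \<rho> = {} \<longleftrightarrow> Conv \<pi> \<inter> \<rho> = {}"
  proof (intro ballI)
    fix \<pi> \<rho> assume "\<pi> \<in> Q" "\<rho> \<in> Q"
    thus "Conv (?f ` \<pi>) \<inter> ?f ` \<rho> = {} \<longleftrightarrow> Conv \<pi> \<inter> \<rho> = {}"
      using Conv_image_Int[OF f] finite_partition_block[OF assms] by (metis Sup_upper image_is_empty)
  qed
qed

definition heap_ratio :: "nat set set \<Rightarrow> real" where
  "heap_ratio Q = real (ho Q) / fact (card Q)"

lemma heap_ratio_empty [simp]: "heap_ratio {} = 1"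
  unfolding heap_ratio_def by (simp add: ho_empty)

lemma heap_ratio_std: "finite_partition Q \<Longrightarrow> heap_ratio (std Q) = heap_ratio Q"
  unfolding heap_ratio_def by (simp add: ho_std card_std)

lemma heap_ratio_rec:
  assumes "finite Q" "Q \<noteq> {}"
  shows "(\<Sum>x\<in>{x\<in>Q. outer_block Q x}. heap_ratio (Q - {x})) = real (card Q) * heap_ratio Q"
proof -
  obtain k where k: "card Q = Suc k" using assms by (metis card_gt_0_iff gr0_implies_Suc)
  have "card (Q - {x}) = k" if "x \<in> {x\<in>Q. outer_block Q x}" for x using that k assms(1) by simp
  hence "(\<Sum>x\<in>{x\<in>Q. outer_block Q x}. heap_ratio (Q - {x}))
      = (\<Sum>x\<in>{x\<in>Q. outer_block Q x}. real (ho (Q - {x})) / fact k)"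
    unfolding heap_ratio_def by simp
  also have "\<dots> = real (ho Q) / fact k"
    unfolding ho_rec[OF assms] by (simp add: sum_divide_distrib)
  also have "\<dots> = real (card Q) * heap_ratio Q" unfolding heap_ratio_def k by simp
  finally show ?thesis .
qed

definition unnested :: "nat set set \<Rightarrow> nat set set \<Rightarrow> bool" where
  "unnested A B \<longleftrightarrow> (\<forall>a\<in>A. \<forall>b\<in>B. Conv a \<inter> b = {} \<and> Conv b \<inter> a = {})"

lemma outer_block_Un_left:
  assumes "unnested A B" "x \<in> A"
  shows "outer_block (A \<union> B) x \<longleftrightarrow> outer_block A x"
proof -
  have "\<forall>\<pi>\<in>B. Conv \<pi> \<inter> x = {}" using assms unfolding unnested_def by simp
  thus ?thesis using assms(2) unfolding outer_block_def by auto
qed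

lemma outer_block_Un_right:
  assumes "unnested A B" "x \<in> B"
  shows "outer_block (A \<union> B) x \<longleftrightarrow> outer_block B x"
proof -
  have "\<forall>\<pi>\<in>A. Conv \<pi> \<inter> x = {}" using assms unfolding unnested_def by simp
  thus ?thesis using assms(2) unfolding outer_block_def by auto
qed

lemma heap_ratio_Un:
  assumes "finite A" "finite B" "A \<inter> B = {}" "unnested A B"
  shows "heap_ratio (A \<union> B) = heap_ratio A * heap_ratio B"
  using assms
proof (induction "card A + card B" arbitrary: A B rule: less_induct)
  case less
  show ?case
  proof (cases "A = {} \<or> B = {}")
    case True thus ?thesis by auto
  next
    case False
    let ?OA = "{x\<in>A. outer_block A x}" and ?OB = "{x\<in>B. outer_block B x}"
    have outer: "{x\<in>A \<union> B. outer_block (A \<union> B) x} = ?OA \<union> ?OB"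
      using outer_block_Un_left[OF less.prems(4)] outer_block_Un_right[OF less.prems(4)] by blast
    have IH_A: "heap_ratio (A \<union> B - {x}) = heap_ratio (A - {x}) * heap_ratio B" if "x \<in> ?OA" for x
    proof -
      have "A \<union> B - {x} = (A - {x}) \<union> B" using that less.prems(3) by blast
      moreover have "card (A - {x}) < card A" using that card_Diff1_less[OF less.prems(1)] by blast
      moreover have "unnested (A - {x}) B" using less.prems(4) unfolding unnested_def by blast
      ultimately show ?thesis using less.hyps[of "A - {x}" B] less.prems(1-3) by auto
    qed
    have IH_B: "heap_ratio (A \<union> B - {x}) = heap_ratio A * heap_ratio (B - {x})" if "x \<in> ?OB" for x
    proof -
      have "A \<union> B - {x} = A \<union> (B - {x})" using that less.prems(3) by blast
      moreover have "card (B - {x}) < card B" using that card_Diff1_less[OF less.prems(2)] by blast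
      moreover have "unnested A (B - {x})" using less.prems(4) unfolding unnested_def by blast
      ultimately show ?thesis using less.hyps[of A "B - {x}"] less.prems(1-3) by auto
    qed
    have "real (card (A \<union> B)) * heap_ratio (A \<union> B)
        = (\<Sum>x\<in>?OA \<union> ?OB. heap_ratio (A \<union> B - {x}))"
      using heap_ratio_rec[of "A \<union> B"] less.prems False unfolding outer by simp
    also have "\<dots> = (\<Sum>x\<in>?OA. heap_ratio (A - {x}) * heap_ratio B)
                   + (\<Sum>x\<in>?OB. heap_ratio A * heap_ratio (B - {x}))"
      using less.prems(1-3) IH_A IH_B by (subst sum.union_disjoint) auto
    also have "(\<Sum>x\<in>?OA. heap_ratio (A - {x}) * heap_ratio B)
        = real (card A) * heap_ratio A * heap_ratio B"
      using heap_ratio_rec[of A] less.prems(1) False by (simp add: sum_distrib_right[symmetric])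
    also have "(\<Sum>x\<in>?OB. heap_ratio A * heap_ratio (B - {x}))
        = heap_ratio A * (real (card B) * heap_ratio B)"
      using heap_ratio_rec[of B] less.prems(2) False by (simp add: sum_distrib_left[symmetric])
    also have "real (card A) * heap_ratio A * heap_ratio B
        + heap_ratio A * (real (card B) * heap_ratio B) = real (card A + card B) * (heap_ratio A * heap_ratio B)"
      by (simp add: algebra_simps)
    finally have "real (card A + card B) * heap_ratio (A \<union> B)
        = real (card A + card B) * (heap_ratio A * heap_ratio B)"
      using less.prems(1-3) by (simp add: card_Un_disjoint)
    moreover have "card A + card B > 0" using less.prems(1) False by (simp add: card_gt_0_iff)
    ultimately show ?thesis by simp
  qed
qed

section \<open>Cuts and gaps\<close>

lemma lowersetD: "L \<in> lowersets P \<Longrightarrow> \<tau> \<in> L \<Longrightarrow> \<sigma> \<in> P \<Longrightarrow> Conv \<sigma> \<inter> \<tau> \<noteq> {} \<Longrightarrow> \<sigma> \<in> L"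
  unfolding lowersets_def by blast

lemma lowersets_subset: "L \<in> lowersets P \<Longrightarrow> L \<subseteq> P"
  unfolding lowersets_def by blast

lemma empty_lowerset: "{} \<in> lowersets P"
  unfolding lowersets_def by blast

lemma full_lowerset: "P \<in> lowersets P"
  unfolding lowersets_def by blast

lemma finite_lowersets: "finite P \<Longrightarrow> finite (lowersets P)"
  unfolding lowersets_def by (rule finite_subset[of _ "Pow P"]) auto

lemma singleton_lowerset_iff:
  assumes "\<pi> \<in> P" shows "{\<pi>} \<in> lowersets P \<longleftrightarrow> outer_block P \<pi>"
  using assms unfolding lowersets_def outer_block_def by auto

lemma Conv_Int_lowerset:
  assumes P: "finite_partition P" and L: "L \<in> lowersets P" and \<rho>: "\<rho> \<in> P - L"
  shows "Conv \<rho> \<inter> \<Union>L = {}"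
proof (rule equals0I)
  fix z assume "z \<in> Conv \<rho> \<inter> \<Union>L"
  then obtain \<tau> where "\<tau> \<in> L" "Conv \<rho> \<inter> \<tau> \<noteq> {}" by blast
  thus False using lowersetD[OF L] \<rho> by blast
qed

definition gap_index :: "nat set set \<Rightarrow> nat \<Rightarrow> nat" where
  "gap_index L y = card {x \<in> \<Union>L. x < y}"

definition gap_blocks :: "nat set set \<Rightarrow> nat set set \<Rightarrow> nat \<Rightarrow> nat set set" where
  "gap_blocks P L i = {\<rho> \<in> P - L. gap_index L (Min \<rho>) = i}"

lemma gap_eq: "gap P L i = {y \<in> \<Union>P - \<Union>L. gap_index L y = i}"
  unfolding gap_def gap_index_def ..

lemma gap_index_le: "finite (\<Union>L) \<Longrightarrow> gap_index L y \<le> card (\<Union>L)"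
  unfolding gap_index_def by (rule card_mono) auto

lemma gap_index_Conv:
  assumes P: "finite_partition P" and L: "L \<in> lowersets P" and \<rho>: "\<rho> \<in> P - L" and y: "y \<in> Conv \<rho>"
  shows "gap_index L y = gap_index L (Min \<rho>)"
proof -
  have "x < y \<longleftrightarrow> x < Min \<rho>" if "x \<in> \<Union>L" for x
  proof -
    have "x \<notin> {Min \<rho>..Max \<rho>}" using Conv_Int_lowerset[OF P L \<rho>] that unfolding Conv_def by blast
    thus ?thesis using y unfolding Conv_def by auto
  qed
  hence "{x \<in> \<Union>L. x < y} = {x \<in> \<Union>L. x < Min \<rho>}" by blast
  thus ?thesis unfolding gap_index_def by simp
qed

lemma Int_gap:
  assumes P: "finite_partition P" and L: "L \<in> lowersets P" and \<pi>: "\<pi> \<in> P"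
  shows "\<pi> \<inter> gap P L i = (if \<pi> \<notin> L \<and> gap_index L (Min \<pi>) = i then \<pi> else {})"
proof (cases "\<pi> \<in> L")
  case True
  thus ?thesis unfolding gap_def by auto
next
  case False
  have "\<pi> \<subseteq> Conv \<pi>" using subset_Conv finite_partition_block[OF P \<pi>] by blast
  hence "\<pi> \<inter> \<Union>L = {}" and "\<forall>y\<in>\<pi>. gap_index L y = gap_index L (Min \<pi>)"
    using Conv_Int_lowerset[OF P L] gap_index_Conv[OF P L] \<pi> False by blast+
  thus ?thesis using False \<pi> unfolding gap_eq by auto
qed

lemma restr_gap:
  assumes P: "finite_partition P" and L: "L \<in> lowersets P"
  shows "restr P (gap P L i) = gap_blocks P L i"
proof -
  have "restr P (gap P L i) = (\<lambda>\<pi>. if \<pi> \<notin> L \<and> gap_index L (Min \<pi>) = i then \<pi> else {}) ` P - {{}}"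
    unfolding restr_def using Int_gap[OF P L] by (simp cong: image_cong)
  also have "\<dots> = gap_blocks P L i"
    using finite_partition_block[OF P] unfolding gap_blocks_def by (auto simp: image_iff)
  finally show ?thesis .
qed

lemma upper_eq_gap_blocks:
  assumes "finite_partition P" "L \<in> lowersets P"
  shows "upper P L = filter (\<lambda>Q. Q \<noteq> {}) (map (\<lambda>i. std (gap_blocks P L i)) [0..<card (\<Union>L) + 1])"
  unfolding upper_def restr_gap[OF assms] ..

lemma gap_blocks_subset: "gap_blocks P L i \<subseteq> P"
  unfolding gap_blocks_def by blast

lemma Conv_Int_gap_blocks:
  assumes P: "finite_partition P" and L: "L \<in> lowersets P"
    and \<rho>: "\<rho> \<in> gap_blocks P L i" and \<rho>': "\<rho>' \<in> gap_blocks P L j" and "i \<noteq> j"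
  shows "Conv \<rho> \<inter> \<rho>' = {}"
proof (rule equals0I)
  fix y assume y: "y \<in> Conv \<rho> \<inter> \<rho>'"
  have i: "\<rho> \<in> P - L" "gap_index L (Min \<rho>) = i" and j: "\<rho>' \<in> P - L" "gap_index L (Min \<rho>') = j"
    using \<rho> \<rho>' unfolding gap_blocks_def by auto
  have "y \<in> Conv \<rho>'" using y subset_Conv finite_partition_block[OF P] j(1) by blast
  hence "gap_index L y = j" using gap_index_Conv[OF P L j(1)] j(2) by simp
  moreover have "gap_index L y = i" using gap_index_Conv[OF P L i(1)] i(2) y by simp
  ultimately show False using \<open>i \<noteq> j\<close> by simp
qed

lemma unnested_gap_blocks:
  assumes P: "finite_partition P" and L: "L \<in> lowersets P" and "i \<notin> I"
  shows "unnested (\<Union>j\<in>I. gap_blocks P L j) (gap_blocks P L i)"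
  unfolding unnested_def
proof (intro ballI conjI)
  fix a b assume a: "a \<in> (\<Union>j\<in>I. gap_blocks P L j)" and b: "b \<in> gap_blocks P L i"
  then obtain j where j: "j \<in> I" "a \<in> gap_blocks P L j" by blast
  have "j \<noteq> i" using j \<open>i \<notin> I\<close> by blast
  show "Conv a \<inter> b = {}" by (rule Conv_Int_gap_blocks[OF P L j(2) b \<open>j \<noteq> i\<close>])
  show "Conv b \<inter> a = {}" using Conv_Int_gap_blocks[OF P L b j(2)] \<open>j \<noteq> i\<close> by simp
qed

lemma Union_gap_blocks:
  assumes P: "finite_partition P" and L: "L \<in> lowersets P"
  shows "(\<Union>i<card (\<Union>L) + 1. gap_blocks P L i) = P - L"
proof -
  have "finite (\<Union>L)"
    using finite_partition_finite_Union[OF finite_partition_subset[OF P lowersets_subset[OF L]]] .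
  thus ?thesis using gap_index_le unfolding gap_blocks_def by (fastforce simp: less_Suc_eq_le)
qed

lemma prod_list_filter_nonempty:
  fixes \<phi> :: "'a set \<Rightarrow> 'b::monoid_mult"
  shows "\<phi> {} = 1 \<Longrightarrow> prod_list (map \<phi> (filter (\<lambda>Q. Q \<noteq> {}) xs)) = prod_list (map \<phi> xs)"
  by (induction xs) auto

lemma prod_list_upper:
  fixes \<phi> :: "nat set set \<Rightarrow> 'a::comm_monoid_mult"
  assumes P: "finite_partition P" and L: "L \<in> lowersets P"
    and empty: "\<phi> {} = 1" and std: "\<And>U. U \<subseteq> P \<Longrightarrow> \<phi> (std U) = \<phi> U"
    and mult: "\<And>A B. A \<subseteq> P \<Longrightarrow> B \<subseteq> P \<Longrightarrow> A \<inter> B = {} \<Longrightarrow> unnested A B \<Longrightarrow> \<phi> (A \<union> B) = \<phi> A * \<phi> B"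
  shows "prod_list (map \<phi> (upper P L)) = \<phi> (P - L)"
proof -
  have union: "(\<Prod>i<n. \<phi> (gap_blocks P L i)) = \<phi> (\<Union>i<n. gap_blocks P L i)" for n
  proof (induction n)
    case 0 thus ?case using empty by simp
  next
    case (Suc n)
    have "(\<Union>i<Suc n. gap_blocks P L i) = (\<Union>i<n. gap_blocks P L i) \<union> gap_blocks P L n"
      by (auto simp: lessThan_Suc)
    moreover have "(\<Union>i<n. gap_blocks P L i) \<inter> gap_blocks P L n = {}"
      unfolding gap_blocks_def by auto
    moreover have "(\<Union>i<n. gap_blocks P L i) \<subseteq> P" using gap_blocks_subset by blast
    ultimately show ?case
      using Suc mult[OF _ gap_blocks_subset] unnested_gap_blocks[OF P L, of n "{..<n}"] by simp
  qed
  let ?c = "card (\<Union>L) + 1"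
  have "prod_list (map \<phi> (upper P L)) = prod_list (map (\<lambda>i. \<phi> (gap_blocks P L i)) [0..<?c])"
    unfolding upper_eq_gap_blocks[OF P L] prod_list_filter_nonempty[of \<phi>, OF empty]
    using std[OF gap_blocks_subset] by (simp add: comp_def del: upt_Suc)
  also have "\<dots> = (\<Prod>i<?c. \<phi> (gap_blocks P L i))"
    by (simp flip: prod.distinct_set_conv_list add: atLeast0LessThan)
  also have "\<dots> = \<phi> (P - L)" unfolding union Union_gap_blocks[OF P L] ..
  finally show ?thesis .
qed

lemma sum_list_card_upper:
  assumes P: "finite_partition P" and L: "L \<in> lowersets P"
  shows "sum_list (map card (upper P L)) = card (P - L)"
proof -
  \<comment> \<open>additivity of \<open>card\<close>, read multiplicatively through \<open>2 ^ card\<close>\<close>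
  have "prod_list (map (\<lambda>Q. (2::nat) ^ card Q) (upper P L)) = 2 ^ card (P - L)"
  proof (rule prod_list_upper[OF P L])
    show "(2::nat) ^ card (std U) = 2 ^ card U" if "U \<subseteq> P" for U
      using card_std[OF finite_partition_subset[OF P that]] by simp
    show "(2::nat) ^ card (A \<union> B) = 2 ^ card A * 2 ^ card B"
      if "A \<subseteq> P" "B \<subseteq> P" "A \<inter> B = {}" for A B
      using that finite_subset[OF _ finite_partition_finite[OF P]]
      by (simp add: card_Un_disjoint power_add)
  qed simp
  moreover have "(2::nat) ^ sum_list (map card xs) = prod_list (map (\<lambda>Q. 2 ^ card Q) xs)"
    for xs :: "nat set set list"
    by (induction xs) (auto simp: power_add)
  ultimately have "(2::nat) ^ sum_list (map card (upper P L)) = 2 ^ card (P - L)" by simp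
  thus ?thesis by simp
qed

lemma heap_ratio_upper:
  assumes P: "finite_partition P" and L: "L \<in> lowersets P"
  shows "prod_list (map heap_ratio (upper P L)) = heap_ratio (P - L)"
proof (rule prod_list_upper[OF P L])
  show "heap_ratio (std U) = heap_ratio U" if "U \<subseteq> P" for U
    using heap_ratio_std[OF finite_partition_subset[OF P that]] .
  show "heap_ratio (A \<union> B) = heap_ratio A * heap_ratio B"
    if "A \<subseteq> P" "B \<subseteq> P" "A \<inter> B = {}" "unnested A B" for A B
    using finite_partition_finite[OF P] that
    by (intro heap_ratio_Un) (auto intro: finite_subset)
qed simp

lemma ncp_upper:
  assumes P: "finite_partition P" "noncrossing P" and L: "L \<in> lowersets P"
    and Q: "Q \<in> set (upper P L)"
  shows "ncp Q" "Q \<noteq> {}"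
proof -
  obtain i where "Q = std (gap_blocks P L i)" and "Q \<noteq> {}"
    using Q unfolding upper_eq_gap_blocks[OF P(1) L] by (auto simp del: upt_Suc)
  thus "ncp Q" "Q \<noteq> {}"
    using ncp_std finite_partition_subset[OF P(1) gap_blocks_subset]
      noncrossing_subset[OF P(2) gap_blocks_subset] by auto
qed

lemma upper_empty:
  assumes "ncp P" "P \<noteq> {}"
  shows "upper P {} = [P]"
proof -
  have "gap_blocks P {} 0 = P" unfolding gap_blocks_def gap_index_def by simp
  thus ?thesis
    unfolding upper_eq_gap_blocks[OF ncp_finite_partition[OF assms(1)] empty_lowerset]
    using std_ncp[OF assms(1)] assms(2) by simp
qed

lemma upper_full: "finite_partition P \<Longrightarrow> upper P P = []"
  unfolding upper_eq_gap_blocks[OF _ full_lowerset] gap_blocks_def by (simp add: filter_map comp_def)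

lemma lower_empty [simp]: "lower P {} = []"
  unfolding lower_def by simp

lemma lower_full: "ncp P \<Longrightarrow> P \<noteq> {} \<Longrightarrow> lower P P = [P]"
  unfolding lower_def using std_ncp by simp

lemma upper_eq_Nil_iff:
  assumes P: "finite_partition P" and L: "L \<in> lowersets P"
  shows "upper P L = [] \<longleftrightarrow> L = P"
proof
  assume "upper P L = []"
  hence "card (P - L) = 0" using sum_list_card_upper[OF P L] by simp
  thus "L = P" using lowersets_subset[OF L] finite_partition_finite[OF P] by auto
qed (use upper_full[OF P] in simp)

lemma upper_eq_singleton_iff:
  assumes P: "finite_partition P" "noncrossing P" and L: "L \<in> lowersets P"
  shows "(\<exists>Q. upper P L = [Q] \<and> card Q = 1) \<longleftrightarrow> card (P - L) = 1"
proof -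
  have pos: "\<forall>Q\<in>set (upper P L). card Q \<ge> 1"
    using ncp_upper[OF P L] finite_partition_finite[OF ncp_finite_partition]
    by (simp add: Suc_le_eq card_gt_0_iff)
  have sum: "sum_list (map card (upper P L)) = card (P - L)" by (rule sum_list_card_upper[OF P(1) L])
  show ?thesis
  proof
    assume "card (P - L) = 1"
    then obtain Q ys where "upper P L = Q # ys" using sum by (cases "upper P L") auto
    moreover from this have "ys = []" "card Q = 1"
      using sum pos \<open>card (P - L) = 1\<close> by (cases ys; force)+
    ultimately show "\<exists>Q. upper P L = [Q] \<and> card Q = 1" by blast
  qed (use sum in auto)
qed

section \<open>The block containing 1\<close>

definition first_block :: "nat set set \<Rightarrow> nat set" where
  "first_block P = (THE \<pi>. \<pi> \<in> P \<and> 1 \<in> \<pi>)"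

lemma one_in_Union_ncp: assumes "ncp P" "P \<noteq> {}" shows "1 \<in> \<Union>P"
proof -
  obtain n where n: "\<Union>P = {1..n}" using ncp_Union[OF assms(1)] .
  have "\<Union>P \<noteq> {}" using assms ncp_finite_partition finite_partition_block by blast
  thus ?thesis unfolding n by simp
qed

lemma
  assumes "ncp P" "P \<noteq> {}"
  shows first_block_in: "first_block P \<in> P"
    and one_in_first_block: "1 \<in> first_block P"
    and first_block_eqI: "\<pi> \<in> P \<Longrightarrow> 1 \<in> \<pi> \<Longrightarrow> first_block P = \<pi>"
proof -
  obtain \<pi>\<^sub>1 where \<pi>\<^sub>1: "\<pi>\<^sub>1 \<in> P" "1 \<in> \<pi>\<^sub>1" using one_in_Union_ncp[OF assms] by blast
  have unique: "\<pi> = \<pi>\<^sub>1" if "\<pi> \<in> P" "1 \<in> \<pi>" for \<pi>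
    using finite_partition_block_eq[OF ncp_finite_partition[OF assms(1)] that(1) \<pi>\<^sub>1(1)] that(2) \<pi>\<^sub>1(2)
    by blast
  have "first_block P = \<pi>\<^sub>1"
    unfolding first_block_def
  proof (rule the_equality)
    show "\<pi>\<^sub>1 \<in> P \<and> 1 \<in> \<pi>\<^sub>1" using \<pi>\<^sub>1 by blast
  qed (use unique in blast)
  thus "first_block P \<in> P" "1 \<in> first_block P" using \<pi>\<^sub>1 by simp_all
  show "\<pi> \<in> P \<Longrightarrow> 1 \<in> \<pi> \<Longrightarrow> first_block P = \<pi>" using unique \<open>first_block P = \<pi>\<^sub>1\<close> by simp
qed

lemma Min_first_block: assumes "ncp P" "P \<noteq> {}" shows "Min (first_block P) = 1"
  using first_block_in[OF assms] one_in_first_block[OF assms] ncp_elem_ge_1[OF assms(1)]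
    finite_partition_block[OF ncp_finite_partition[OF assms(1)]]
  by (intro Min_eqI) auto

text \<open>A block nesting the first block would have to start after \<open>1\<close> and end after an
  element of the first block, crossing it.\<close>

lemma outer_first_block:
  assumes P: "ncp P" "P \<noteq> {}"
  shows "outer_block P (first_block P)"
  unfolding outer_block_def
proof (intro conjI ballI impI first_block_in[OF P] equals0I)
  let ?b = "first_block P"
  fix \<sigma> y assume \<sigma>: "\<sigma> \<in> P" "\<sigma> \<noteq> ?b" and y: "y \<in> Conv \<sigma> \<inter> ?b"
  have P': "finite_partition P" by (rule ncp_finite_partition[OF P(1)])
  have fin: "finite \<sigma>" "\<sigma> \<noteq> {}" using finite_partition_block[OF P' \<sigma>(1)] by auto
  have disj: "z \<notin> \<sigma>" if "z \<in> ?b" for z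
    using finite_partition_block_eq[OF P' \<sigma>(1) first_block_in[OF P]] that \<sigma>(2) by blast
  have "y \<notin> \<sigma>" using disj y by blast
  hence "Min \<sigma> \<noteq> y" "Max \<sigma> \<noteq> y" using Min_in[OF fin] Max_in[OF fin] by auto
  hence "Min \<sigma> < y" "y < Max \<sigma>" using y unfolding Conv_def by auto
  moreover have "1 < Min \<sigma>"
    using ncp_elem_ge_1[OF P(1) \<sigma>(1) Min_in[OF fin]] disj[OF one_in_first_block[OF P]] Min_in[OF fin]
    by (metis le_neq_implies_less)
  ultimately show False
    using noncrossingD[OF ncp_noncrossing[OF P(1)] first_block_in[OF P] \<sigma>(1)] \<sigma>(2)
      one_in_first_block[OF P] y Min_in[OF fin] Max_in[OF fin] by blast
qed

lemma one_in_Union_lowerset_iff: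
  assumes "ncp P" "P \<noteq> {}" "L \<in> lowersets P"
  shows "1 \<in> \<Union>L \<longleftrightarrow> first_block P \<in> L"
  using first_block_eqI[OF assms(1,2)] one_in_first_block[OF assms(1,2)] lowersets_subset[OF assms(3)]
  by blast

lemma lowersets_with_1_card_eq_1:
  assumes "ncp P" "P \<noteq> {}"
  shows "{L \<in> lowersets P. 1 \<in> \<Union>L \<and> card L = 1} = {{first_block P}}"
proof -
  have eq: "L = {first_block P}" if L: "L \<in> lowersets P" "1 \<in> \<Union>L" "card L = 1" for L
  proof -
    obtain \<pi> where "L = {\<pi>}" using card_1_singletonE[OF L(3)] .
    moreover have "first_block P \<in> L" using L one_in_Union_lowerset_iff[OF assms L(1)] by blast
    ultimately show ?thesis by simp
  qed
  have "{first_block P} \<in> lowersets P"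
    using singleton_lowerset_iff[OF first_block_in[OF assms]] outer_first_block[OF assms] by simp
  show ?thesis
  proof (intro equalityI subsetI)
    fix L assume "L \<in> {L \<in> lowersets P. 1 \<in> \<Union>L \<and> card L = 1}"
    hence "L = {first_block P}" using eq by blast
    thus "L \<in> {{first_block P}}" by simp
  next
    fix L assume "L \<in> {{first_block P}}"
    thus "L \<in> {L \<in> lowersets P. 1 \<in> \<Union>L \<and> card L = 1}"
      using \<open>{first_block P} \<in> lowersets P\<close> one_in_first_block[OF assms] by auto
  qed
qed

lemma Diff_first_block_lowerset_iff:
  assumes P: "ncp P" "P \<noteq> {}"
  shows "P - {first_block P} \<in> lowersets P \<longleftrightarrow> Conv (first_block P) = first_block P"
proof
  let ?b = "first_block P"
  have b: "?b \<in> P" "finite ?b" "?b \<noteq> {}"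
    using first_block_in[OF P] finite_partition_block[OF ncp_finite_partition[OF P(1)]] by auto
  assume low: "P - {?b} \<in> lowersets P"
  have "z \<in> ?b" if z: "z \<in> Conv ?b" for z
  proof -
    obtain n where n: "\<Union>P = {1..n}" using ncp_Union[OF P(1)] .
    have "Max ?b \<in> \<Union>P" using Max_in[OF b(2,3)] b(1) by blast
    hence "z \<in> \<Union>P" using z unfolding n Conv_def Min_first_block[OF P] by auto
    then obtain \<sigma> where \<sigma>: "\<sigma> \<in> P" "z \<in> \<sigma>" by blast
    have "\<sigma> = ?b"
    proof (rule ccontr)
      assume "\<sigma> \<noteq> ?b"
      hence "?b \<in> P - {?b}" using lowersetD[OF low _ b(1)] \<sigma> z by blast
      thus False by blast
    qed
    thus ?thesis using \<sigma>(2) by simp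
  qed
  thus "Conv ?b = ?b" using subset_Conv[OF b(2)] by blast
next
  let ?b = "first_block P"
  assume Conv: "Conv ?b = ?b"
  show "P - {?b} \<in> lowersets P" unfolding lowersets_def
  proof (intro CollectI conjI ballI impI)
    fix \<tau> \<sigma> assume \<tau>: "\<tau> \<in> P - {?b}" and \<sigma>: "\<sigma> \<in> P" and "Conv \<sigma> \<inter> \<tau> \<noteq> {}"
    show "\<sigma> \<in> P - {?b}"
    proof (rule ccontr)
      assume "\<sigma> \<notin> P - {?b}"
      hence "?b \<inter> \<tau> \<noteq> {}" using \<sigma> Conv \<open>Conv \<sigma> \<inter> \<tau> \<noteq> {}\<close> by simp
      then obtain x where "x \<in> ?b" "x \<in> \<tau>" by blast
      hence "\<tau> = ?b"
        using finite_partition_block_eq[OF ncp_finite_partition[OF P(1)] _ first_block_in[OF P]] \<tau>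
        by blast
      thus False using \<tau> by blast
    qed
  qed blast
qed

lemma lowersets_without_1_card_Diff_eq_1:
  assumes P: "ncp P" "P \<noteq> {}"
  shows "{L \<in> lowersets P. 1 \<notin> \<Union>L \<and> card (P - L) = 1} =
    (if Conv (first_block P) = first_block P then {P - {first_block P}} else {})"
proof -
  let ?b = "first_block P"
  have "L \<in> lowersets P \<and> 1 \<notin> \<Union>L \<and> card (P - L) = 1 \<longleftrightarrow> L = P - {?b} \<and> Conv ?b = ?b" for L
  proof
    assume L: "L \<in> lowersets P \<and> 1 \<notin> \<Union>L \<and> card (P - L) = 1"
    have "?b \<in> P - L" using first_block_in[OF P] one_in_Union_lowerset_iff[OF P] L by blast
    moreover obtain \<pi> where "P - L = {\<pi>}" using L card_1_singletonE by metis
    ultimately have "P - L = {?b}" by simp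
    moreover have "P - (P - L) = L" using double_diff[OF lowersets_subset order_refl] L by blast
    ultimately have "L = P - {?b}" by simp
    thus "L = P - {?b} \<and> Conv ?b = ?b" using Diff_first_block_lowerset_iff[OF P] L by blast
  next
    assume L: "L = P - {?b} \<and> Conv ?b = ?b"
    hence "L \<in> lowersets P" using Diff_first_block_lowerset_iff[OF P] by blast
    moreover have "P - L = {?b}" using L first_block_in[OF P] by blast
    ultimately show "L \<in> lowersets P \<and> 1 \<notin> \<Union>L \<and> card (P - L) = 1"
      using one_in_Union_lowerset_iff[OF P] L by simp
  qed
  thus ?thesis by (auto simp del: Diff_iff)
qed

lemma Conv_std_block_iff:
  assumes Q: "finite_partition Q" and \<pi>: "\<pi> \<in> Q"
  shows "Conv (rank (\<Union>Q) ` \<pi>) = rank (\<Union>Q) ` \<pi> \<longleftrightarrow> Conv \<pi> \<inter> \<Union>Q \<subseteq> \<pi>"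
proof -
  let ?f = "rank (\<Union>Q)"
  have f: "strict_mono_on (\<Union>Q) ?f"
    by (rule strict_mono_on_rank[OF finite_partition_finite_Union[OF Q]])
  have fin: "finite \<pi>" "\<pi> \<noteq> {}" and sub: "\<pi> \<subseteq> \<Union>Q" using finite_partition_block[OF Q \<pi>] \<pi> by auto
  have range: "?f ` \<Union>Q = {1..card (\<Union>Q)}"
    by (rule rank_image[OF finite_partition_finite_Union[OF Q]])
  have "Min (?f ` \<pi>) \<in> ?f ` \<pi>" "Max (?f ` \<pi>) \<in> ?f ` \<pi>" using fin by simp_all
  hence "Min (?f ` \<pi>) \<in> ?f ` \<Union>Q" "Max (?f ` \<pi>) \<in> ?f ` \<Union>Q" using sub by blast+
  hence "Conv (?f ` \<pi>) \<subseteq> ?f ` \<Union>Q" unfolding range Conv_def by auto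
  hence "Conv (?f ` \<pi>) \<inter> ?f ` \<Union>Q = Conv (?f ` \<pi>)" by (rule Int_absorb2)
  hence Conv: "Conv (?f ` \<pi>) = ?f ` (Conv \<pi> \<inter> \<Union>Q)"
    using Conv_image_Int[OF f sub fin order_refl] by simp
  have "?f ` (Conv \<pi> \<inter> \<Union>Q) = ?f ` \<pi> \<longleftrightarrow> Conv \<pi> \<inter> \<Union>Q = \<pi>"
    by (rule inj_on_image_eq_iff[OF strict_mono_on_imp_inj_on[OF f]]) (use sub in auto)
  moreover have "\<pi> \<subseteq> Conv \<pi> \<inter> \<Union>Q" using subset_Conv[OF fin(1)] sub by blast
  ultimately show ?thesis unfolding Conv by auto
qed

text \<open>If the first block is an initial interval, every other block lies to its right, so the
  convex hulls of the remaining blocks avoid it.\<close>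

lemma Conv_subset_Diff_first_block:
  assumes P: "ncp P" "P \<noteq> {}" and Conv: "Conv (first_block P) = first_block P"
    and \<pi>: "\<pi> \<in> P - {first_block P}"
  shows "Conv \<pi> \<subseteq> \<Union>(P - {first_block P})"
proof
  let ?b = "first_block P"
  fix z assume z: "z \<in> Conv \<pi>"
  have fin: "finite \<pi>" "\<pi> \<noteq> {}" "finite ?b" "?b \<noteq> {}"
    using finite_partition_block[OF ncp_finite_partition[OF P(1)]] \<pi> first_block_in[OF P] by auto
  have disj: "x \<notin> ?b" if "x \<in> \<pi>" for x
    using finite_partition_block_eq[OF ncp_finite_partition[OF P(1)] _ first_block_in[OF P]] \<pi> that
    by blast
  obtain n where n: "\<Union>P = {1..n}" using ncp_Union[OF P(1)] .
  have "Min \<pi> \<in> \<Union>P" "Max \<pi> \<in> \<Union>P" using Min_in[OF fin(1,2)] Max_in[OF fin(1,2)] \<pi> by blast+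
  hence "z \<in> \<Union>P" using z unfolding n Conv_def by auto
  moreover have "z \<notin> ?b"
  proof
    assume "z \<in> ?b"
    have "{1..Max ?b} \<subseteq> ?b" using Conv unfolding Conv_def Min_first_block[OF P] by simp
    moreover have "1 \<le> Min \<pi>" using ncp_elem_ge_1[OF P(1)] \<pi> Min_in[OF fin(1,2)] by blast
    moreover have "Min \<pi> \<le> z" using z unfolding Conv_def by simp
    moreover have "z \<le> Max ?b" using Max_ge[OF fin(3) \<open>z \<in> ?b\<close>] .
    ultimately have "Min \<pi> \<in> ?b" by (meson atLeastAtMost_iff le_trans subsetD)
    thus False using disj Min_in[OF fin(1,2)] by blast
  qed
  ultimately show "z \<in> \<Union>(P - {?b})" by blast
qed

lemma boolean_std_Diff_first_block:
  assumes P: "ncp P" "P \<noteq> {}" and Conv: "Conv (first_block P) = first_block P"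
  shows "boolean_ncp (std (P - {first_block P})) \<longleftrightarrow> boolean_ncp P"
proof -
  let ?Q = "P - {first_block P}"
  have Q: "finite_partition ?Q" using finite_partition_subset[OF ncp_finite_partition[OF P(1)]] by blast
  have "boolean_ncp (std ?Q) \<longleftrightarrow> (\<forall>\<pi>\<in>?Q. Conv (rank (\<Union>?Q) ` \<pi>) = rank (\<Union>?Q) ` \<pi>)"
    unfolding boolean_ncp_def std_eq_image by blast
  also have "\<dots> \<longleftrightarrow> (\<forall>\<pi>\<in>?Q. Conv \<pi> = \<pi>)"
  proof (intro ball_cong[OF refl])
    fix \<pi> assume \<pi>: "\<pi> \<in> ?Q"
    have "Conv \<pi> \<inter> \<Union>?Q = Conv \<pi>" using Conv_subset_Diff_first_block[OF P Conv \<pi>] by blast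
    thus "Conv (rank (\<Union>?Q) ` \<pi>) = rank (\<Union>?Q) ` \<pi> \<longleftrightarrow> Conv \<pi> = \<pi>"
      using Conv_std_block_iff[OF Q \<pi>] subset_Conv[of \<pi>] finite_partition_block[OF Q \<pi>] by auto
  qed
  also have "\<dots> \<longleftrightarrow> boolean_ncp P" unfolding boolean_ncp_def using Conv by blast
  finally show ?thesis .
qed

lemma lowersets_card_1: "{L \<in> lowersets P. card L = 1} = (\<lambda>\<pi>. {\<pi>}) ` {\<pi>\<in>P. outer_block P \<pi>}"
proof (intro equalityI subsetI)
  fix L assume L: "L \<in> {L \<in> lowersets P. card L = 1}"
  then obtain \<pi> where \<pi>: "L = {\<pi>}" using card_1_singletonE by blast
  hence "\<pi> \<in> P" using L lowersets_subset by blast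
  thus "L \<in> (\<lambda>\<pi>. {\<pi>}) ` {\<pi>\<in>P. outer_block P \<pi>}" using singleton_lowerset_iff L \<pi> by blast
qed (use singleton_lowerset_iff in auto)

section \<open>Cutting words against the infinitesimal character\<close>

abbreviation lower_word :: "nat set set list \<Rightarrow> nat set set list \<Rightarrow> nat set set list" where
  "lower_word w Ls \<equiv> concat (map (\<lambda>(P, L). lower P L) (zip w Ls))"

abbreviation upper_word :: "nat set set list \<Rightarrow> nat set set list \<Rightarrow> nat set set list" where
  "upper_word w Ls \<equiv> concat (map (\<lambda>(P, L). upper P L) (zip w Ls))"

lemma valid_word_Cons: "valid_word (P # ws) \<longleftrightarrow> ncp P \<and> P \<noteq> {} \<and> valid_word ws"
  unfolding valid_word_def by auto

lemma finite_partition_lowerset: "ncp P \<Longrightarrow> L \<in> lowersets P \<Longrightarrow> finite_partition L"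
  using finite_partition_subset[OF ncp_finite_partition lowersets_subset] by blast

lemma set_Cons_eq_image: "set_Cons A X = (\<lambda>(a, xs). a # xs) ` (A \<times> X)"
  unfolding set_Cons_def by auto

lemma sum_set_Cons:
  assumes "finite A" "finite X"
  shows "(\<Sum>z\<in>set_Cons A X. h z) = (\<Sum>a\<in>A. \<Sum>xs\<in>X. h (a # xs))"
proof -
  have "inj_on (\<lambda>(a, xs). a # xs) (A \<times> X)" by (rule inj_onI) auto
  hence "(\<Sum>z\<in>set_Cons A X. h z) = (\<Sum>(a, xs)\<in>A \<times> X. h (a # xs))"
    unfolding set_Cons_eq_image by (simp add: sum.reindex split_def)
  thus ?thesis by (simp add: sum.cartesian_product)
qed

lemma finite_listset_lowersets: "valid_word ws \<Longrightarrow> finite (listset (map lowersets ws))"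
proof (induction ws)
  case (Cons P ws)
  hence "finite (lowersets P)" "finite (listset (map lowersets ws))"
    using finite_lowersets finite_partition_finite ncp_finite_partition by (auto simp: valid_word_Cons)
  thus ?case by (simp add: set_Cons_eq_image)
qed simp

lemma replicate_empty_in_listset: "replicate (length ws) {} \<in> listset (map lowersets ws)"
  by (induction ws) (auto simp: set_Cons_def empty_lowerset)

lemma self_in_listset: "ws \<in> listset (map lowersets ws)"
  by (induction ws) (auto simp: set_Cons_def full_lowerset)

lemma lower_word_eq_Nil_iff:
  "Ls \<in> listset (map lowersets ws) \<Longrightarrow> lower_word ws Ls = [] \<longleftrightarrow> Ls = replicate (length ws) {}"
proof (induction ws arbitrary: Ls)
  case (Cons P ws)
  then obtain L Ls' where "Ls = L # Ls'" "Ls' \<in> listset (map lowersets ws)"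
    by (auto simp: set_Cons_def)
  moreover have "lower P L = [] \<longleftrightarrow> L = {}" unfolding lower_def by simp
  ultimately show ?case using Cons.IH by simp
qed simp

lemma upper_word_eq_Nil_iff:
  "valid_word ws \<Longrightarrow> Ls \<in> listset (map lowersets ws) \<Longrightarrow> upper_word ws Ls = [] \<longleftrightarrow> Ls = ws"
proof (induction ws arbitrary: Ls)
  case (Cons P ws)
  then obtain L Ls' where "Ls = L # Ls'" "L \<in> lowersets P" "Ls' \<in> listset (map lowersets ws)"
    by (auto simp: set_Cons_def)
  moreover from this have "upper P L = [] \<longleftrightarrow> L = P"
    using Cons.prems(1) upper_eq_Nil_iff[OF ncp_finite_partition] by (simp add: valid_word_Cons)
  ultimately show ?case using Cons.IH Cons.prems(1) by (simp add: valid_word_Cons)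
qed simp

lemma upper_word_replicate_empty: "valid_word ws \<Longrightarrow> upper_word ws (replicate (length ws) {}) = ws"
  by (induction ws) (simp_all add: valid_word_Cons upper_empty)

lemma lower_word_self: "valid_word ws \<Longrightarrow> lower_word ws ws = ws"
  by (induction ws) (simp_all add: valid_word_Cons lower_full)

lemma echar_singleton_append: "echar ([Q] @ r) = (if r = [] \<and> card Q = 1 then 1 else 0)"
  unfolding echar_def by auto

lemma echar_append:
  "xs \<noteq> [] \<Longrightarrow> echar (xs @ r) = (if r = [] \<and> (\<exists>Q. xs = [Q] \<and> card Q = 1) then 1 else 0)"
  unfolding echar_def by (cases xs) auto

lemma sum_listset_Cons:
  assumes "valid_word (P # ws)"
  shows "(\<Sum>Ls\<in>{Ls \<in> listset (map lowersets (P # ws)). c (hd Ls)}.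
            f (lower_word (P # ws) Ls) * g (upper_word (P # ws) Ls)) =
         (\<Sum>L\<in>{L \<in> lowersets P. c L}. \<Sum>Ls\<in>listset (map lowersets ws).
            f (lower P L @ lower_word ws Ls) * g (upper P L @ upper_word ws Ls))"
proof -
  have "{Ls \<in> listset (map lowersets (P # ws)). c (hd Ls)} =
      set_Cons {L \<in> lowersets P. c L} (listset (map lowersets ws))"
    unfolding list.map listset.simps set_Cons_def by auto
  moreover have "finite (lowersets P)" "finite (listset (map lowersets ws))"
    using assms finite_lowersets finite_partition_finite ncp_finite_partition finite_listset_lowersets
    by (auto simp: valid_word_Cons)
  ultimately show ?thesis by (simp add: sum_set_Cons)
qed

text \<open>Since \<open>e\<close> vanishes on products, a nonempty lower factor of the first letter leaves only
  the cut in which all other letters have empty lower factors.\<close>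

lemma sum_echar_lower:
  assumes ws: "valid_word ws" and L: "L \<noteq> {}" "finite_partition L"
  shows "(\<Sum>Ls\<in>listset (map lowersets ws). echar (lower P L @ lower_word ws Ls) * h (upper_word ws Ls)) =
         (if card L = 1 then h ws else 0)"
proof -
  let ?r = "replicate (length ws) {}"
  have "echar (lower P L @ lower_word ws Ls) * h (upper_word ws Ls) =
      (if Ls = ?r then (if card L = 1 then h ws else 0) else 0)"
    if "Ls \<in> listset (map lowersets ws)" for Ls
    using L echar_singleton_append[of "std L"] lower_word_eq_Nil_iff[OF that] card_std[OF L(2)]
      upper_word_replicate_empty[OF ws]
    unfolding lower_def by simp
  thus ?thesis
    using finite_listset_lowersets[OF ws] replicate_empty_in_listset[of ws] by (simp add: sum.delta)
qed

lemma sum_echar_upper: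
  assumes ws: "valid_word ws" and U: "upper P L \<noteq> []"
  shows "(\<Sum>Ls\<in>listset (map lowersets ws). h (lower_word ws Ls) * echar (upper P L @ upper_word ws Ls)) =
         (if \<exists>Q. upper P L = [Q] \<and> card Q = 1 then h ws else 0)"
proof -
  have "h (lower_word ws Ls) * echar (upper P L @ upper_word ws Ls) =
      (if Ls = ws then (if \<exists>Q. upper P L = [Q] \<and> card Q = 1 then h ws else 0) else 0)"
    if "Ls \<in> listset (map lowersets ws)" for Ls
    using echar_append[OF U] upper_word_eq_Nil_iff[OF ws that] lower_word_self[OF ws] by auto
  thus ?thesis
    using finite_listset_lowersets[OF ws] self_in_listset[of ws] by (simp add: sum.delta)
qed

lemma conv_echar_Cons:
  assumes v: "valid_word (P # ws)"
  shows "conv echar g (P # ws) =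
    (\<Sum>\<pi>\<in>{\<pi>\<in>P. outer_block P \<pi>}. g (upper P {\<pi>} @ ws)) + conv echar (\<lambda>v. g (P # v)) ws"
proof -
  have P: "ncp P" "P \<noteq> {}" and ws: "valid_word ws" using v valid_word_Cons by auto
  have fin: "finite (lowersets P)"
    by (rule finite_lowersets[OF finite_partition_finite[OF ncp_finite_partition[OF P(1)]]])
  let ?I = "\<lambda>L. \<Sum>Ls\<in>listset (map lowersets ws).
    echar (lower P L @ lower_word ws Ls) * g (upper P L @ upper_word ws Ls)"
  have "conv echar g (P # ws) = (\<Sum>L\<in>{L \<in> lowersets P. True}. ?I L)"
    unfolding conv_def using sum_listset_Cons[OF v, where c = "\<lambda>_. True"] by simp
  also have "\<dots> = ?I {} + (\<Sum>L\<in>lowersets P - {{}}. ?I L)"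
    using sum.remove[OF fin empty_lowerset, of ?I] by simp
  also have "?I {} = conv echar (\<lambda>v. g (P # v)) ws"
    unfolding conv_def using upper_empty[OF P] by simp
  also have "(\<Sum>L\<in>lowersets P - {{}}. ?I L) =
      (\<Sum>L\<in>lowersets P - {{}}. if card L = 1 then g (upper P L @ ws) else 0)"
  proof (rule sum.cong[OF refl])
    fix L assume "L \<in> lowersets P - {{}}"
    thus "?I L = (if card L = 1 then g (upper P L @ ws) else 0)"
      using sum_echar_lower[OF ws, of L P "\<lambda>u. g (upper P L @ u)"] finite_partition_lowerset[OF P(1)]
      by blast
  qed
  also have "\<dots> = (\<Sum>L\<in>{L \<in> lowersets P. card L = 1}. g (upper P L @ ws))"
    using fin by (intro sum.mono_neutral_cong_right) auto
  also have "\<dots> = (\<Sum>\<pi>\<in>{\<pi>\<in>P. outer_block P \<pi>}. g (upper P {\<pi>} @ ws))"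
    unfolding lowersets_card_1 by (rule sum.reindex[unfolded comp_def]) (auto intro: inj_onI)
  finally show ?thesis by simp
qed

lemma dprec_echar_Cons:
  assumes v: "valid_word (P # ws)"
  shows "dprec echar \<psi> (P # ws) = \<psi> (upper P {first_block P} @ ws)"
proof -
  have P: "ncp P" "P \<noteq> {}" and ws: "valid_word ws" using v valid_word_Cons by auto
  have fin: "finite (lowersets P)"
    by (rule finite_lowersets[OF finite_partition_finite[OF ncp_finite_partition[OF P(1)]]])
  let ?I = "\<lambda>L. \<Sum>Ls\<in>listset (map lowersets ws).
    echar (lower P L @ lower_word ws Ls) * \<psi> (upper P L @ upper_word ws Ls)"
  have "dprec echar \<psi> (P # ws) = (\<Sum>L\<in>{L \<in> lowersets P. 1 \<in> \<Union>L}. ?I L)"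
    unfolding dprec_def using sum_listset_Cons[OF v, where c = "\<lambda>L. 1 \<in> \<Union>L"] by simp
  also have "\<dots> = (\<Sum>L\<in>{L \<in> lowersets P. 1 \<in> \<Union>L}. if card L = 1 then \<psi> (upper P L @ ws) else 0)"
  proof (rule sum.cong[OF refl])
    fix L assume L: "L \<in> {L \<in> lowersets P. 1 \<in> \<Union>L}"
    hence "L \<noteq> {}" by auto
    thus "?I L = (if card L = 1 then \<psi> (upper P L @ ws) else 0)"
      using sum_echar_lower[OF ws, of L P "\<lambda>u. \<psi> (upper P L @ u)"] L finite_partition_lowerset[OF P(1)]
      by blast
  qed
  also have "\<dots> = (\<Sum>L\<in>{L \<in> lowersets P. 1 \<in> \<Union>L \<and> card L = 1}. \<psi> (upper P L @ ws))"
    using fin by (simp add: sum.inter_filter[symmetric] conj_ac)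
  also have "\<dots> = \<psi> (upper P {first_block P} @ ws)"
    unfolding lowersets_with_1_card_eq_1[OF P] by simp
  finally show ?thesis .
qed

lemma dsucc_echar_Cons:
  assumes v: "valid_word (P # ws)"
  shows "dsucc \<psi> echar (P # ws) =
    (if Conv (first_block P) = first_block P then \<psi> (lower P (P - {first_block P}) @ ws) else 0)"
proof -
  have P: "ncp P" "P \<noteq> {}" and ws: "valid_word ws" using v valid_word_Cons by auto
  have fd: "finite_partition P" "noncrossing P"
    using ncp_finite_partition[OF P(1)] ncp_noncrossing[OF P(1)] by auto
  have fin: "finite (lowersets P)" by (rule finite_lowersets[OF finite_partition_finite[OF fd(1)]])
  let ?I = "\<lambda>L. \<Sum>Ls\<in>listset (map lowersets ws).
    \<psi> (lower P L @ lower_word ws Ls) * echar (upper P L @ upper_word ws Ls)"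
  have "dsucc \<psi> echar (P # ws) = (\<Sum>L\<in>{L \<in> lowersets P. 1 \<notin> \<Union>L}. ?I L)"
    unfolding dsucc_def using sum_listset_Cons[OF v, where c = "\<lambda>L. 1 \<notin> \<Union>L"] by simp
  also have "\<dots> = (\<Sum>L\<in>{L \<in> lowersets P. 1 \<notin> \<Union>L}. if card (P - L) = 1 then \<psi> (lower P L @ ws) else 0)"
  proof (rule sum.cong[OF refl])
    fix L assume L: "L \<in> {L \<in> lowersets P. 1 \<notin> \<Union>L}"
    hence "L \<noteq> P" using one_in_Union_ncp[OF P] by blast
    hence "upper P L \<noteq> []" using upper_eq_Nil_iff[OF fd(1)] L by blast
    thus "?I L = (if card (P - L) = 1 then \<psi> (lower P L @ ws) else 0)"
      using sum_echar_upper[OF ws, of P L "\<lambda>u. \<psi> (lower P L @ u)"] upper_eq_singleton_iff[OF fd] L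
      by simp
  qed
  also have "\<dots> = (\<Sum>L\<in>{L \<in> lowersets P. 1 \<notin> \<Union>L \<and> card (P - L) = 1}. \<psi> (lower P L @ ws))"
    using fin by (simp add: sum.inter_filter[symmetric] conj_ac)
  also have "\<dots> =
      (if Conv (first_block P) = first_block P then \<psi> (lower P (P - {first_block P}) @ ws) else 0)"
    unfolding lowersets_without_1_card_Diff_eq_1[OF P] by simp
  finally show ?thesis .
qed

section \<open>The three characters\<close>

definition num_blocks :: "nat set set list \<Rightarrow> nat" where
  "num_blocks w = sum_list (map card w)"

lemma num_blocks_simps [simp]:
  "num_blocks [] = 0" "num_blocks (P # w) = card P + num_blocks w"
  "num_blocks (u @ v) = num_blocks u + num_blocks v"
  unfolding num_blocks_def by simp_all

lemma valid_word_append: "valid_word (u @ v) \<longleftrightarrow> valid_word u \<and> valid_word v"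
  unfolding valid_word_def by auto

lemma ncp_card_pos: "ncp P \<Longrightarrow> P \<noteq> {} \<Longrightarrow> 0 < card P"
  using finite_partition_finite[OF ncp_finite_partition] by (simp add: card_gt_0_iff)

lemma num_blocks_eq_0_iff: "valid_word w \<Longrightarrow> num_blocks w = 0 \<longleftrightarrow> w = []"
  by (cases w) (auto simp: valid_word_Cons dest: ncp_card_pos)

lemma
  assumes "ncp P" "L \<in> lowersets P"
  shows valid_word_upper: "valid_word (upper P L)"
    and num_blocks_upper: "num_blocks (upper P L) = card (P - L)"
  using ncp_upper[OF ncp_finite_partition[OF assms(1)] ncp_noncrossing[OF assms(1)] assms(2)]
    sum_list_card_upper[OF ncp_finite_partition[OF assms(1)] assms(2)]
  unfolding valid_word_def num_blocks_def by auto

lemma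
  assumes "ncp P" "outer_block P \<pi>"
  shows valid_word_upper_singleton: "valid_word (upper P {\<pi>})"
    and num_blocks_upper_singleton: "num_blocks (upper P {\<pi>}) = card P - 1"
proof -
  have "\<pi> \<in> P" using assms(2) unfolding outer_block_def by blast
  thus "valid_word (upper P {\<pi>})" "num_blocks (upper P {\<pi>}) = card P - 1"
    using valid_word_upper[OF assms(1)] num_blocks_upper[OF assms(1)] singleton_lowerset_iff assms(2)
    by simp_all
qed

lemma prec_eq_imp_eq_1:
  assumes \<psi>: "prec_eq \<psi>" and "valid_word w"
  shows "\<psi> w = 1"
  using assms(2)
proof (induction "num_blocks w" arbitrary: w rule: less_induct)
  case less
  show ?case
  proof (cases w)
    case Nil
    thus ?thesis using \<psi> less.prems unfolding prec_eq_def eps_def dprec_def by simp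
  next
    case (Cons P ws)
    have P: "ncp P" "P \<noteq> {}" and ws: "valid_word ws" using less.prems Cons valid_word_Cons by auto
    have b: "outer_block P (first_block P)" by (rule outer_first_block[OF P])
    have "\<psi> w = \<psi> (upper P {first_block P} @ ws)"
      using \<psi> less.prems dprec_echar_Cons[of P ws \<psi>] Cons unfolding prec_eq_def eps_def by simp
    also have "\<dots> = 1"
      using less.hyps valid_word_upper_singleton[OF P(1) b] num_blocks_upper_singleton[OF P(1) b]
        ncp_card_pos[OF P] ws Cons by (simp add: valid_word_append)
    finally show ?thesis .
  qed
qed

lemma prec_eq_1: "prec_eq (\<lambda>_. 1)"
  unfolding prec_eq_def
proof (intro allI impI)
  fix w :: "nat set set list" assume "valid_word w"
  thus "1 = eps w + dprec echar (\<lambda>_. 1) w"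
    by (cases w) (simp_all add: eps_def dprec_echar_Cons, simp add: dprec_def)
qed

definition boolean_indicator :: "nat set set list \<Rightarrow> real" where
  "boolean_indicator w = (if \<forall>P\<in>set w. boolean_ncp P then 1 else 0)"

lemma
  assumes P: "ncp P" "P \<noteq> {}"
  shows valid_word_lower_Diff_first_block: "valid_word (lower P (P - {first_block P}))"
    and num_blocks_lower_Diff_first_block: "num_blocks (lower P (P - {first_block P})) = card P - 1"
proof -
  let ?Q = "P - {first_block P}"
  have Q: "finite_partition ?Q" "noncrossing ?Q"
    using finite_partition_subset[OF ncp_finite_partition[OF P(1)]]
      noncrossing_subset[OF ncp_noncrossing[OF P(1)]] by blast+
  have "card ?Q = card P - 1"
    using first_block_in[OF P] finite_partition_finite[OF ncp_finite_partition[OF P(1)]] by simp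
  moreover have "card P - 1 = 0" if "?Q = {}" using that \<open>card ?Q = card P - 1\<close> by (metis card.empty)
  moreover have "std ?Q \<noteq> {}" if "?Q \<noteq> {}" using that card_std[OF Q(1)] Q(1)
    by (metis card_eq_0_iff finite_partition_finite)
  ultimately show "valid_word (lower P ?Q)" "num_blocks (lower P ?Q) = card P - 1"
    unfolding lower_def valid_word_def using ncp_std[OF Q] card_std[OF Q(1)] by auto
qed

lemma boolean_indicator_Cons:
  assumes P: "ncp P" "P \<noteq> {}"
  shows "(if Conv (first_block P) = first_block P
          then boolean_indicator (lower P (P - {first_block P}) @ ws) else 0)
       = boolean_indicator (P # ws)"
proof (cases "Conv (first_block P) = first_block P")
  case False
  hence "\<not> boolean_ncp P" using first_block_in[OF P] unfolding boolean_ncp_def by blast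
  thus ?thesis using False unfolding boolean_indicator_def by auto
next
  case True
  show ?thesis
  proof (cases "P - {first_block P} = {}")
    case Q_empty: True
    hence "P = {first_block P}" using first_block_in[OF P] by blast
    hence "boolean_ncp P" using True unfolding boolean_ncp_def by (metis singletonD)
    thus ?thesis using True unfolding Q_empty boolean_indicator_def by simp
  next
    case False
    thus ?thesis using True boolean_std_Diff_first_block[OF P True]
      unfolding boolean_indicator_def lower_def by simp
  qed
qed

lemma succ_eq_boolean_indicator: "succ_eq boolean_indicator"
  unfolding succ_eq_def
proof (intro allI impI)
  fix w :: "nat set set list" assume "valid_word w"
  thus "boolean_indicator w = eps w + dsucc boolean_indicator echar w"
    by (cases w) (simp_all add: eps_def dsucc_echar_Cons boolean_indicator_Cons valid_word_Cons,
        simp add: dsucc_def boolean_indicator_def)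
qed

lemma succ_eq_imp_eq_boolean_indicator:
  assumes \<psi>: "succ_eq \<psi>" and "valid_word w"
  shows "\<psi> w = boolean_indicator w"
  using assms(2)
proof (induction "num_blocks w" arbitrary: w rule: less_induct)
  case less
  show ?case
  proof (cases w)
    case Nil
    thus ?thesis using \<psi> less.prems unfolding succ_eq_def eps_def dsucc_def boolean_indicator_def by simp
  next
    case (Cons P ws)
    have P: "ncp P" "P \<noteq> {}" and ws: "valid_word ws" using less.prems Cons valid_word_Cons by auto
    let ?v = "lower P (P - {first_block P}) @ ws"
    have "\<psi> w = (if Conv (first_block P) = first_block P then \<psi> ?v else 0)"
      using \<psi> less.prems dsucc_echar_Cons[of P ws \<psi>] Cons unfolding succ_eq_def eps_def by simp
    moreover have "\<psi> ?v = boolean_indicator ?v"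
      using less.hyps valid_word_lower_Diff_first_block[OF P] num_blocks_lower_Diff_first_block[OF P]
        ncp_card_pos[OF P] ws Cons by (simp add: valid_word_append)
    ultimately show ?thesis using boolean_indicator_Cons[OF P, of ws, symmetric] Cons by simp
  qed
qed

lemma conv_echar_cong:
  assumes "valid_word w" "\<And>v. valid_word v \<Longrightarrow> g v = g' v"
  shows "conv echar g w = conv echar g' w"
  using assms
proof (induction w arbitrary: g g')
  case Nil thus ?case by (simp add: conv_def echar_def)
next
  case (Cons P ws)
  have P: "ncp P" "P \<noteq> {}" and ws: "valid_word ws" using Cons.prems(1) valid_word_Cons by auto
  have "g (upper P {\<pi>} @ ws) = g' (upper P {\<pi>} @ ws)" if "\<pi> \<in> {\<pi>\<in>P. outer_block P \<pi>}" for \<pi>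
    using valid_word_upper_singleton[OF P(1)] that ws
    by (intro Cons.prems(2)) (simp add: valid_word_append)
  moreover have "conv echar (\<lambda>v. g (P # v)) ws = conv echar (\<lambda>v. g' (P # v)) ws"
    using P by (intro Cons.IH[OF ws] Cons.prems(2)) (simp add: valid_word_Cons)
  ultimately show ?case using conv_echar_Cons[OF Cons.prems(1)] by simp
qed

definition echar_power :: "nat \<Rightarrow> nat set set list \<Rightarrow> real" where
  "echar_power m w = (if m = num_blocks w then fact m * prod_list (map heap_ratio w) else 0)"

text \<open>Unfolding \<open>e \<star> g\<close> letter by letter: for every letter either one outer block is split
  off, or the letter is passed on untouched; the prefix \<open>pre\<close> records the letters passed on.\<close>

lemma conv_echar_echar_power:
  assumes "valid_word (pre @ ws)"
  shows "conv echar (\<lambda>v. echar_power m (pre @ v)) ws =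
    (if Suc m = num_blocks (pre @ ws)
     then fact m * real (num_blocks ws) * prod_list (map heap_ratio (pre @ ws)) else 0)"
  using assms
proof (induction ws arbitrary: pre)
  case Nil thus ?case by (simp add: conv_def echar_def)
next
  case (Cons P ws)
  have pre: "valid_word pre" and Pws: "valid_word (P # ws)" using Cons.prems valid_word_append by auto
  have P: "ncp P" "P \<noteq> {}" using Pws valid_word_Cons by auto
  let ?O = "{\<pi>\<in>P. outer_block P \<pi>}"
  let ?N = "num_blocks (pre @ P # ws)"
  let ?A = "prod_list (map heap_ratio pre)" and ?B = "prod_list (map heap_ratio ws)"
  have split: "echar_power m (pre @ upper P {\<pi>} @ ws) =
      (if Suc m = ?N then fact m * (?A * heap_ratio (P - {\<pi>}) * ?B) else 0)" if "\<pi> \<in> ?O" for \<pi>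
  proof -
    have "{\<pi>} \<in> lowersets P" using that singleton_lowerset_iff by blast
    hence "prod_list (map heap_ratio (upper P {\<pi>})) = heap_ratio (P - {\<pi>})"
      by (rule heap_ratio_upper[OF ncp_finite_partition[OF P(1)]])
    moreover have "m = num_blocks (pre @ upper P {\<pi>} @ ws) \<longleftrightarrow> Suc m = ?N"
      using num_blocks_upper_singleton[OF P(1)] that ncp_card_pos[OF P] by auto
    ultimately show ?thesis unfolding echar_power_def by (simp add: mult.assoc)
  qed
  have "(\<Sum>\<pi>\<in>?O. echar_power m (pre @ upper P {\<pi>} @ ws)) =
      (if Suc m = ?N then fact m * real (card P) * prod_list (map heap_ratio (pre @ P # ws)) else 0)"
  proof (cases "Suc m = ?N")
    case True
    have "(\<Sum>\<pi>\<in>?O. echar_power m (pre @ upper P {\<pi>} @ ws))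
        = fact m * ?A * ?B * (\<Sum>\<pi>\<in>?O. heap_ratio (P - {\<pi>}))"
      using split True by (simp add: sum_distrib_left mult_ac)
    also have "\<dots> = fact m * real (card P) * prod_list (map heap_ratio (pre @ P # ws))"
      using heap_ratio_rec[OF finite_partition_finite[OF ncp_finite_partition[OF P(1)]] P(2)]
      by (simp add: mult_ac)
    finally show ?thesis using True by simp
  qed (use split in simp)
  moreover have "conv echar (\<lambda>v. echar_power m ((pre @ [P]) @ v)) ws =
      (if Suc m = ?N then fact m * real (num_blocks ws) * prod_list (map heap_ratio (pre @ P # ws))
       else 0)"
    using Cons.IH[of "pre @ [P]"] Cons.prems by simp
  ultimately show ?case
    using conv_echar_Cons[OF Pws, of "\<lambda>v. echar_power m (pre @ v)"] by (simp add: algebra_simps)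
qed

lemma conv_pow_echar: "valid_word w \<Longrightarrow> conv_pow echar m w = echar_power m w"
proof (induction m arbitrary: w)
  case 0
  thus ?case unfolding echar_power_def using num_blocks_eq_0_iff[OF 0] by (auto simp: eps_def)
next
  case (Suc m)
  have "conv_pow echar (Suc m) w = conv echar (\<lambda>v. echar_power m ([] @ v)) w"
    using conv_echar_cong[OF Suc.prems Suc.IH] by simp
  also have "\<dots> =
      (if Suc m = num_blocks w then fact m * real (num_blocks w) * prod_list (map heap_ratio w) else 0)"
    using conv_echar_echar_power[of "[]" w m] Suc.prems by simp
  also have "\<dots> = echar_power (Suc m) w"
  proof (cases "Suc m = num_blocks w")
    case True
    thus ?thesis unfolding echar_power_def by (simp add: True[symmetric] algebra_simps)
  qed (simp add: echar_power_def)
  finally show ?case .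
qed

lemma psi_star_singleton:
  assumes "ncp P" "P \<noteq> {}"
  shows "psi_star [P] = heap_ratio P"
proof -
  have "valid_word [P]" using assms unfolding valid_word_def by simp
  hence "(\<lambda>m. conv_pow echar m [P] / fact m) = (\<lambda>m. if m = card P then heap_ratio P else 0)"
    unfolding conv_pow_echar[OF \<open>valid_word [P]\<close>] echar_power_def by auto
  moreover have "(\<lambda>m. if m = card P then heap_ratio P else 0) sums heap_ratio P"
    using sums_single[of "card P" "\<lambda>_. heap_ratio P"] by simp
  ultimately show ?thesis unfolding psi_star_def by (simp add: sums_iff)
qed

theorem mainTheorem16:
  fixes P :: "nat set set"
  assumes "ncp P" and "P \<noteq> {}"
  shows "((\<exists>\<psi>. prec_eq \<psi>) \<and> (\<forall>\<psi>. prec_eq \<psi> \<longrightarrow> \<psi> [P] = 1)) \<and>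
         ((\<exists>\<psi>. succ_eq \<psi>) \<and>
         (\<forall>\<psi>. succ_eq \<psi> \<longrightarrow> \<psi> [P] = (if boolean_ncp P then 1 else 0))) \<and>
         psi_star [P] = real (ho P) / fact (card P)"
proof -
  have P: "valid_word [P]" using assms unfolding valid_word_def by simp
  have "\<forall>\<psi>. prec_eq \<psi> \<longrightarrow> \<psi> [P] = 1" using prec_eq_imp_eq_1 P by blast
  moreover have "\<forall>\<psi>. succ_eq \<psi> \<longrightarrow> \<psi> [P] = (if boolean_ncp P then 1 else 0)"
    using succ_eq_imp_eq_boolean_indicator[OF _ P] unfolding boolean_indicator_def by simp
  moreover have "psi_star [P] = real (ho P) / fact (card P)"
    using psi_star_singleton[OF assms] unfolding heap_ratio_def .
  ultimately show ?thesis using prec_eq_1 succ_eq_boolean_indicator by blast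
qed

end
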